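(* Let $G$ be a finite group, $\mathbb{F}$ an algebraically closed field of characteristic $p\ge0$, $A=\mathbb{F}G$, and $V$ an $\mathbb{F}G$-module of dimension $n$. For any $p$-regular element $g\in G$, let $\mathbf{s}(g)=(\chi_{S_1}(g),\dots,\chi_{S_{\ell+1}}(g))^T\in\mathbb{C}^{\ell+1}$. Then $\mathbf{s}(g)^TM_V=\chi_V(g)\,\mathbf{s}(g)^T$ and $\mathbf{s}(g)^TL_V=(n-\chi_V(g))\,\mathbf{s}(g)^T$.
   Context: $S_1,\dots,S_{\ell+1}$ are the pairwise non-isomorphic simple $\mathbb{F}G$-modules; modules are finite-dimensional, and $G$ acts diagonally on tensor products. $M_V$ has entries $(M_V)_{i,j}=[S_j\otimes V:S_i]$ (composition multiplicities) and $L_V=nI_{\ell+1}-M_V$. An element is $p$-regular if its order is invertible in $\mathbb{F}$. Writing $\#G=p^aq$ with $\gcd(p,q)=1$ ($q=\#G$ if $p=0$) and fixing an isomorphism $\lambda\mapsto\widehat\lambda$ from $q$-th roots of unity in $\mathbb{F}$ to those in $\mathbb{C}$, the Brauer character of a module $W$ at a $p$-regular $g$ with eigenvalues $\lambda_1,\dots,\lambda_m$ on $W$ is $\chi_W(g)=\sum_i\widehat{\lambda_i}$. *)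

theory Defs
  imports "HOL-Algebra.Multiplicative_Group" "Jordan_Normal_Form.Matrix" "Jordan_Normal_Form.Char_Poly"
    "HOL-Computational_Algebra.Polynomial"
begin

text \<open>A finite-dimensional FG-module of dimension d is given (after choosing a basis)
 by a matrix representation rho : G -> GL_d(F).\<close>
definition is_rep :: "('g, 'm) monoid_scheme \<Rightarrow> nat \<Rightarrow> ('g \<Rightarrow> 'f::field mat) \<Rightarrow> bool" where
  "is_rep G d \<rho> \<longleftrightarrow>
     (\<forall>g\<in>carrier G. \<rho> g \<in> carrier_mat d d) \<and>
     \<rho> \<one>\<^bsub>G\<^esub> = 1\<^sub>m d \<and>
     (\<forall>g\<in>carrier G. \<forall>h\<in>carrier G. \<rho> (g \<otimes>\<^bsub>G\<^esub> h) = \<rho> g * \<rho> h)"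

definition is_subspace :: "nat \<Rightarrow> 'f::field vec set \<Rightarrow> bool" where
  "is_subspace d W \<longleftrightarrow> W \<subseteq> carrier_vec d \<and> 0\<^sub>v d \<in> W \<and>
     (\<forall>v\<in>W. \<forall>w\<in>W. v + w \<in> W) \<and> (\<forall>c. \<forall>v\<in>W. c \<cdot>\<^sub>v v \<in> W)"

definition is_submodule :: "('g, 'm) monoid_scheme \<Rightarrow> nat \<Rightarrow> ('g \<Rightarrow> 'f::field mat) \<Rightarrow> 'f vec set \<Rightarrow> bool" where
  "is_submodule G d \<rho> W \<longleftrightarrow> is_subspace d W \<and> (\<forall>g\<in>carrier G. \<forall>w\<in>W. \<rho> g *\<^sub>v w \<in> W)"

definition is_simple :: "('g, 'm) monoid_scheme \<Rightarrow> nat \<Rightarrow> ('g \<Rightarrow> 'f::field mat) \<Rightarrow> bool" where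
  "is_simple G d \<rho> \<longleftrightarrow> is_rep G d \<rho> \<and> d > 0 \<and>
     (\<forall>W. is_submodule G d \<rho> W \<longrightarrow> W = {0\<^sub>v d} \<or> W = carrier_vec d)"

definition rep_iso :: "('g, 'm) monoid_scheme \<Rightarrow> nat \<Rightarrow> ('g \<Rightarrow> 'f::field mat) \<Rightarrow> nat \<Rightarrow> ('g \<Rightarrow> 'f mat) \<Rightarrow> bool" where
  "rep_iso G d \<rho> e \<sigma> \<longleftrightarrow> d = e \<and>
     (\<exists>P \<in> carrier_mat d d. invertible_mat P \<and> (\<forall>g\<in>carrier G. P * \<rho> g = \<sigma> g * P))"

text \<open>The factor W'/W of submodules W \<subseteq> W' of (d,rho) is isomorphic to the module (e,sigma):
 there is a linear map P : F^d -> F^e mapping W' onto F^e, with kernel (on W') equal to W,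
 and intertwining the actions on W'.\<close>
definition factor_iso :: "('g, 'm) monoid_scheme \<Rightarrow> nat \<Rightarrow> ('g \<Rightarrow> 'f::field mat) \<Rightarrow> 'f vec set \<Rightarrow> 'f vec set
    \<Rightarrow> nat \<Rightarrow> ('g \<Rightarrow> 'f mat) \<Rightarrow> bool" where
  "factor_iso G d \<rho> W W' e \<sigma> \<longleftrightarrow>
     (\<exists>P \<in> carrier_mat e d. (\<lambda>w. P *\<^sub>v w) ` W' = carrier_vec e \<and>
        {w \<in> W'. P *\<^sub>v w = 0\<^sub>v e} = W \<and>
        (\<forall>g\<in>carrier G. \<forall>w\<in>W'. P *\<^sub>v (\<rho> g *\<^sub>v w) = \<sigma> g *\<^sub>v (P *\<^sub>v w)))"

definition is_comp_series :: "('g, 'm) monoid_scheme \<Rightarrow> nat \<Rightarrow> ('g \<Rightarrow> 'f::field mat) \<Rightarrow> nat \<Rightarrow> (nat \<Rightarrow> 'f vec set) \<Rightarrow> bool" where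
  "is_comp_series G d \<rho> k Ws \<longleftrightarrow>
     Ws 0 = {0\<^sub>v d} \<and> Ws k = carrier_vec d \<and>
     (\<forall>i\<le>k. is_submodule G d \<rho> (Ws i)) \<and>
     (\<forall>i<k. Ws i \<subset> Ws (Suc i) \<and>
        (\<forall>U. is_submodule G d \<rho> U \<and> Ws i \<subseteq> U \<and> U \<subseteq> Ws (Suc i) \<longrightarrow> U = Ws i \<or> U = Ws (Suc i)))"

text \<open>Composition multiplicity [W : S] (well defined by Jordan--Hoelder).\<close>
definition comp_mult :: "('g, 'm) monoid_scheme \<Rightarrow> nat \<Rightarrow> ('g \<Rightarrow> 'f::field mat) \<Rightarrow> nat \<Rightarrow> ('g \<Rightarrow> 'f mat) \<Rightarrow> nat" where
  "comp_mult G d \<rho> e \<sigma> = (SOME c. \<exists>k Ws. is_comp_series G d \<rho> k Ws \<and>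
       c = card {i. i < k \<and> factor_iso G d \<rho> (Ws i) (Ws (Suc i)) e \<sigma>})"

definition kron :: "'f::field mat \<Rightarrow> 'f mat \<Rightarrow> 'f mat" where
  "kron A B = mat (dim_row A * dim_row B) (dim_col A * dim_col B)
     (\<lambda>(i, j). A $$ (i div dim_row B, j div dim_col B) * B $$ (i mod dim_row B, j mod dim_col B))"

definition tensor_rep :: "('g \<Rightarrow> 'f::field mat) \<Rightarrow> ('g \<Rightarrow> 'f mat) \<Rightarrow> ('g \<Rightarrow> 'f mat)" where
  "tensor_rep \<rho> \<sigma> = (\<lambda>g. kron (\<rho> g) (\<sigma> g))"

definition p_regular :: "('g, 'm) monoid_scheme \<Rightarrow> 'f::field itself \<Rightarrow> 'g \<Rightarrow> bool" where
  "p_regular G _ g \<longleftrightarrow> g \<in> carrier G \<and> (of_nat (group.ord G g) :: 'f) \<noteq> 0"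

definition p'_part :: "nat \<Rightarrow> nat \<Rightarrow> nat" where
  "p'_part p N = (if p = 0 then N else N div p ^ multiplicity p N)"

definition brauer_char :: "('f::field \<Rightarrow> complex) \<Rightarrow> ('g \<Rightarrow> 'f mat) \<Rightarrow> 'g \<Rightarrow> complex" where
  "brauer_char hat \<rho> g =
     (\<Sum>e\<in>{x. poly (char_poly (\<rho> g)) x = 0}. of_nat (order e (char_poly (\<rho> g))) * hat e)"

definition M_mat :: "('g, 'm) monoid_scheme \<Rightarrow> (nat \<times> ('g \<Rightarrow> 'f::field mat)) list \<Rightarrow> nat \<Rightarrow> ('g \<Rightarrow> 'f mat) \<Rightarrow> nat mat" where
  "M_mat G Ss n V = mat (length Ss) (length Ss)
     (\<lambda>(i, j). comp_mult G (fst (Ss ! j) * n) (tensor_rep (snd (Ss ! j)) V) (fst (Ss ! i)) (snd (Ss ! i)))"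

definition L_mat :: "('g, 'm) monoid_scheme \<Rightarrow> (nat \<times> ('g \<Rightarrow> 'f::field mat)) list \<Rightarrow> nat \<Rightarrow> ('g \<Rightarrow> 'f mat) \<Rightarrow> int mat" where
  "L_mat G Ss n V = of_nat n \<cdot>\<^sub>m 1\<^sub>m (length Ss) - map_mat of_nat (M_mat G Ss n V)"

definition s_vec :: "('f::field \<Rightarrow> complex) \<Rightarrow> (nat \<times> ('g \<Rightarrow> 'f mat)) list \<Rightarrow> 'g \<Rightarrow> complex mat" where
  "s_vec hat Ss g = mat (length Ss) 1 (\<lambda>(i, _). brauer_char hat (snd (Ss ! i)) g)"

end

theory Submission
  imports Defs
begin

text \<open>For each simple module S, the Brauer character of the tensor
  product of S and V at g is the product of those of S and V: the eigenvalues of a Kronecker product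
  are the products of the eigenvalues of the factors, and these are roots of unity of order dividing
  the p'-part of the group order, on which hat is multiplicative. On the other hand, in a basis
  adapted to a composition series the representing matrices are block upper triangular with the
  composition factors as diagonal blocks, so the Brauer character is additive along the series.
  By the Jordan--Hoelder theorem the multiplicities M(i,j) are well defined, and together this gives
  sum_i M(i,j) s_i(g) = chi_V(g) s_j(g), which is the first identity; the second follows from
  L_V = n I - M_V.\<close>

section \<open>Column spans and bases adapted to a flag of subspaces\<close>

lemma mult_mat_vec_index_sum:
  "i < dim_row A \<Longrightarrow> dim_vec c = dim_col A \<Longrightarrow> (A *\<^sub>v c) $ i = (\<Sum>j<dim_col A. A $$ (i,j) * c $ j)"
  by (simp add: scalar_prod_def lessThan_atLeast0 mult.commute)

lemma mult_mat_vec_unit_vec_index: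
  "(A :: 'a::field mat) \<in> carrier_mat n m \<Longrightarrow> k < m \<Longrightarrow> i < n \<Longrightarrow> (A *\<^sub>v unit_vec m k) $ i = A $$ (i,k)"
  by (simp add: scalar_prod_def unit_vec_def if_distrib[of "(*) _"] sum.delta' cong: if_cong)

lemma mat_eq_by_mult_vec:
  fixes A B :: "'a::field mat"
  assumes A: "A \<in> carrier_mat n m" and B: "B \<in> carrier_mat n m"
    and eq: "\<And>x. x \<in> carrier_vec m \<Longrightarrow> A *\<^sub>v x = B *\<^sub>v x"
  shows "A = B"
proof (rule eq_matI)
  fix i j assume "i < dim_row B" "j < dim_col B"
  then show "A $$ (i,j) = B $$ (i,j)"
    using A B eq[of "unit_vec m j"] mult_mat_vec_unit_vec_index by (metis carrier_matD unit_vec_carrier)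
qed (use A B in auto)

lemma sum_lessThan_add_split:
  "(\<Sum>j<a+b. f j) = (\<Sum>j<a. f j) + (\<Sum>j<b. f (a + j))" for a b :: nat
  by (induction b) (auto simp: add.assoc)

lemma mat_of_cols_append_mult:
  assumes xs: "set xs \<subseteq> carrier_vec d" and ys: "set ys \<subseteq> carrier_vec d"
    and c: "c \<in> carrier_vec (length xs + length ys)"
  shows "mat_of_cols d (xs @ ys) *\<^sub>v c =
    mat_of_cols d xs *\<^sub>v vec (length xs) (\<lambda>i. c $ i) + mat_of_cols d ys *\<^sub>v vec (length ys) (\<lambda>i. c $ (length xs + i))"
proof (rule eq_vecI)
  fix i assume "i < dim_vec (mat_of_cols d xs *\<^sub>v vec (length xs) (\<lambda>i. c $ i)
    + mat_of_cols d ys *\<^sub>v vec (length ys) (\<lambda>i. c $ (length xs + i)))"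
  then have i: "i < d" by simp
  have "(mat_of_cols d (xs @ ys) *\<^sub>v c) $ i = (\<Sum>j<length xs + length ys. (xs @ ys) ! j $ i * c $ j)"
    using i c by (subst mult_mat_vec_index_sum) (auto simp: mat_of_cols_def)
  also have "\<dots> = (\<Sum>j<length xs. xs ! j $ i * c $ j) + (\<Sum>j<length ys. ys ! j $ i * c $ (length xs + j))"
    by (subst sum_lessThan_add_split) (auto simp: nth_append intro!: sum.cong)
  also have "(\<Sum>j<length xs. xs ! j $ i * c $ j) = (mat_of_cols d xs *\<^sub>v vec (length xs) (\<lambda>i. c $ i)) $ i"
    using i by (subst mult_mat_vec_index_sum) (auto simp: mat_of_cols_def)
  also have "(\<Sum>j<length ys. ys ! j $ i * c $ (length xs + j))
      = (mat_of_cols d ys *\<^sub>v vec (length ys) (\<lambda>i. c $ (length xs + i))) $ i"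
    using i by (subst mult_mat_vec_index_sum) (auto simp: mat_of_cols_def)
  finally show "(mat_of_cols d (xs @ ys) *\<^sub>v c) $ i = (mat_of_cols d xs *\<^sub>v vec (length xs) (\<lambda>i. c $ i)
      + mat_of_cols d ys *\<^sub>v vec (length ys) (\<lambda>i. c $ (length xs + i))) $ i"
    using i by simp
qed simp

lemma mult_mat_vec_in_carrier[simp]: "P \<in> carrier_mat e d \<Longrightarrow> P *\<^sub>v w \<in> carrier_vec e"
  by (rule carrier_vecI) auto

lemma mult_mat_vec_zero[simp]: "A \<in> carrier_mat n m \<Longrightarrow> A *\<^sub>v 0\<^sub>v m = 0\<^sub>v n"
  by (rule eq_vecI) (auto simp: scalar_prod_def)

lemma mat_of_cols_Nil_mult: "c \<in> carrier_vec 0 \<Longrightarrow> mat_of_cols d [] *\<^sub>v c = 0\<^sub>v d"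
  by (rule eq_vecI) (auto simp: mult_mat_vec_def scalar_prod_def mat_of_cols_def)

lemma mat_of_cols_single_mult:
  "v \<in> carrier_vec d \<Longrightarrow> c \<in> carrier_vec 1 \<Longrightarrow> mat_of_cols d [v] *\<^sub>v c = (c $ 0) \<cdot>\<^sub>v (v :: 'a::field vec)"
  by (rule eq_vecI) (auto simp: mult_mat_vec_def scalar_prod_def mat_of_cols_def mult.commute)

lemma mat_of_cols_Cons_mult:
  fixes v :: "'a::field vec"
  assumes "v \<in> carrier_vec d" "set bs \<subseteq> carrier_vec d" "c \<in> carrier_vec (Suc (length bs))"
  shows "mat_of_cols d (v # bs) *\<^sub>v c = (c $ 0) \<cdot>\<^sub>v v + mat_of_cols d bs *\<^sub>v vec (length bs) (\<lambda>i. c $ Suc i)"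
  using mat_of_cols_append_mult[of "[v]" d bs c] mat_of_cols_single_mult[of v d "vec 1 (($) c)"] assms
  by simp

lemma mat_of_cols_mult_carrier[simp]: "mat_of_cols d bs *\<^sub>v c \<in> carrier_vec d"
  unfolding carrier_vec_def mat_of_cols_def by simp

lemma subspace_carrier: "is_subspace d W \<Longrightarrow> W \<subseteq> carrier_vec d"
  by (simp add: is_subspace_def)

lemma carrier_is_subspace: "is_subspace d (carrier_vec d :: 'a::field vec set)"
  unfolding is_subspace_def by auto

lemma subspace_diff:
  fixes v w :: "'a::field vec"
  assumes W: "is_subspace d W" and "v \<in> W" "w \<in> W"
  shows "v - w \<in> W"
proof -
  have "v - w = v + (-1) \<cdot>\<^sub>v w" using assms subspace_carrier[OF W] by (intro eq_vecI) auto
  then show ?thesis using assms by (simp add: is_subspace_def)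
qed

lemma subspace_mat_of_cols_mult:
  assumes W: "is_subspace d W" and bs: "set bs \<subseteq> W" and c: "c \<in> carrier_vec (length bs)"
  shows "mat_of_cols d bs *\<^sub>v c \<in> W"
  using bs c
proof (induction bs arbitrary: c)
  case Nil
  then show ?case using W by (simp add: mat_of_cols_Nil_mult is_subspace_def)
next
  case (Cons v bs)
  have "mat_of_cols d bs *\<^sub>v vec (length bs) (\<lambda>i. c $ Suc i) \<in> W" "(c $ 0) \<cdot>\<^sub>v v \<in> W"
    using Cons W by (auto simp: is_subspace_def)
  then show ?case
    using Cons.prems W subspace_carrier[OF W] by (subst mat_of_cols_Cons_mult) (auto simp: is_subspace_def)
qed

definition inj_mat :: "'a::field mat \<Rightarrow> bool" where
  "inj_mat A \<longleftrightarrow> (\<forall>c\<in>carrier_vec (dim_col A). A *\<^sub>v c = 0\<^sub>v (dim_row A) \<longrightarrow> c = 0\<^sub>v (dim_col A))"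

text \<open>Padding a wide matrix with zero rows gives a square matrix that is singular (its transpose
  kills the last unit vector) yet has trivial kernel.\<close>
lemma inj_mat_dim_le:
  fixes A :: "'a::field mat"
  assumes A: "A \<in> carrier_mat n m" and inj: "inj_mat A"
  shows "m \<le> n"
proof (rule ccontr)
  assume "\<not> m \<le> n"
  then have nm: "n < m" by simp
  define B where "B = mat m m (\<lambda>(i,j). if i < n then A $$ (i,j) else (0::'a))"
  have B: "B \<in> carrier_mat m m" unfolding B_def by auto
  have detB: "det B \<noteq> 0"
  proof
    assume "det B = 0"
    then obtain v where v: "v \<in> carrier_vec m" "v \<noteq> 0\<^sub>v m" "B *\<^sub>v v = 0\<^sub>v m"
      using det_0_iff_vec_prod_zero[OF B] by auto
    have "A *\<^sub>v v = 0\<^sub>v n"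
    proof (rule eq_vecI)
      fix i assume "i < dim_vec (0\<^sub>v n :: 'a vec)"
      then have i: "i < n" by simp
      have "(B *\<^sub>v v) $ i = (\<Sum>j<m. A $$ (i,j) * v $ j)"
        using i nm B v(1) by (subst mult_mat_vec_index_sum) (auto simp: B_def)
      also have "\<dots> = (A *\<^sub>v v) $ i" using i A v(1) by (subst mult_mat_vec_index_sum) auto
      finally have "(A *\<^sub>v v) $ i = (B *\<^sub>v v) $ i" ..
      then show "(A *\<^sub>v v) $ i = 0\<^sub>v n $ i" using v(3) i nm by simp
    qed (use A in simp)
    with inj A v show False unfolding inj_mat_def by auto
  qed
  have "transpose_mat B *\<^sub>v unit_vec m (m - 1) = 0\<^sub>v m"
  proof (rule eq_vecI)
    fix i assume "i < dim_vec (0\<^sub>v m :: 'a vec)"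
    then show "(transpose_mat B *\<^sub>v unit_vec m (m - 1)) $ i = 0\<^sub>v m $ i"
      using nm B by (subst mult_mat_vec_unit_vec_index[of _ m m]) (auto simp: B_def)
  qed (use B in simp)
  moreover have "unit_vec m (m - 1) \<noteq> (0\<^sub>v m :: 'a vec)" using nm by simp
  ultimately have "det (transpose_mat B) = 0"
    using det_0_iff_vec_prod_zero[of "transpose_mat B" m] B unit_vec_carrier[of m "m - 1"]
    by (meson transpose_carrier_mat)
  with detB show False using B by (simp add: det_transpose)
qed

lemma right_inverse_into_subspace:
  fixes P :: "'a::field mat"
  assumes P: "P \<in> carrier_mat e d" and Y: "is_subspace d Y" and surj: "(\<lambda>w. P *\<^sub>v w) ` Y = carrier_vec e"
  shows "\<exists>B\<in>carrier_mat d e. P * B = 1\<^sub>m e \<and> (\<forall>c\<in>carrier_vec e. B *\<^sub>v c \<in> Y)"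
proof -
  define pre where "pre j = (SOME x. x \<in> Y \<and> P *\<^sub>v x = unit_vec e j)" for j
  have pre: "pre j \<in> Y \<and> P *\<^sub>v pre j = unit_vec e j" for j
    unfolding pre_def by (rule someI_ex) (use surj in \<open>metis imageE unit_vec_carrier\<close>)
  define B where "B = mat_of_cols d (map pre [0..<e])"
  have B: "B \<in> carrier_mat d e" unfolding B_def using mat_of_cols_carrier(1)[of d "map pre [0..<e]"] by simp
  have "P * B = 1\<^sub>m e"
  proof (rule eq_matI)
    fix i j assume "i < dim_row (1\<^sub>m e :: 'a mat)" "j < dim_col (1\<^sub>m e :: 'a mat)"
    moreover have "col B j = pre j" if "j < e" for j
      unfolding B_def using that pre subspace_carrier[OF Y] by (subst col_mat_of_cols) auto
    ultimately show "(P * B) $$ (i,j) = 1\<^sub>m e $$ (i,j)"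
      using P B pre[of j] by (simp add: index_mult_mat(1) flip: index_mult_mat_vec)
  qed (use P B in auto)
  moreover have "\<forall>c\<in>carrier_vec e. B *\<^sub>v c \<in> Y"
    unfolding B_def using pre by (intro ballI subspace_mat_of_cols_mult[OF Y]) auto
  ultimately show ?thesis using B by blast
qed

lemma right_inverse_inj_mat:
  fixes A :: "'a::field mat"
  assumes A: "A \<in> carrier_mat n m" and B: "B \<in> carrier_mat m n" and AB: "A * B = 1\<^sub>m n"
  shows "inj_mat B"
  unfolding inj_mat_def
proof (intro ballI impI)
  fix c assume c: "c \<in> carrier_vec (dim_col B)" and "B *\<^sub>v c = 0\<^sub>v (dim_row B)"
  then have "(A * B) *\<^sub>v c = 0\<^sub>v n" using A B by (simp add: assoc_mult_mat_vec)
  then show "c = 0\<^sub>v (dim_col B)" using AB c B by simp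
qed

lemma surj_mat_dim_le:
  fixes A :: "'a::field mat"
  assumes A: "A \<in> carrier_mat n m" and surj: "(\<lambda>x. A *\<^sub>v x) ` carrier_vec m = carrier_vec n"
  shows "n \<le> m"
proof -
  obtain B where "B \<in> carrier_mat m n" "A * B = 1\<^sub>m n"
    using right_inverse_into_subspace[OF A carrier_is_subspace surj] by blast
  then show ?thesis using inj_mat_dim_le right_inverse_inj_mat A by blast
qed

lemma inj_mat_square_inverse:
  fixes T :: "'a::field mat"
  assumes T: "T \<in> carrier_mat n n" and inj: "inj_mat T"
  obtains Ti where "Ti \<in> carrier_mat n n" "T * Ti = 1\<^sub>m n" "Ti * T = 1\<^sub>m n"
proof -
  have "det T \<noteq> 0" using det_0_iff_vec_prod_zero[OF T] inj T unfolding inj_mat_def by auto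
  define Ti where "Ti = inverse (det T) \<cdot>\<^sub>m adj_mat T"
  have "Ti \<in> carrier_mat n n" unfolding Ti_def using adj_mat(1)[OF T] by simp
  moreover have "T * Ti = 1\<^sub>m n"
    unfolding Ti_def using T adj_mat[OF T] \<open>det T \<noteq> 0\<close> by (simp add: mult_smult_distrib) (intro eq_matI, auto)
  moreover have "Ti * T = 1\<^sub>m n"
    unfolding Ti_def using T adj_mat[OF T] \<open>det T \<noteq> 0\<close> by (simp add: mult_smult_assoc_mat) (intro eq_matI, auto)
  ultimately show ?thesis using that by blast
qed

definition col_span :: "nat \<Rightarrow> 'a::field vec list \<Rightarrow> 'a vec set" where
  "col_span d bs = (\<lambda>c. mat_of_cols d bs *\<^sub>v c) ` carrier_vec (length bs)"

definition lin_indep_cols :: "nat \<Rightarrow> 'a::field vec list \<Rightarrow> bool" where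
  "lin_indep_cols d bs \<longleftrightarrow> set bs \<subseteq> carrier_vec d \<and> inj_mat (mat_of_cols d bs)"

lemma lin_indep_cols_Nil: "lin_indep_cols d ([] :: 'a::field vec list)"
  unfolding lin_indep_cols_def inj_mat_def by (auto simp: mat_of_cols_def)

lemma lin_indep_cols_length: "lin_indep_cols d bs \<Longrightarrow> length bs \<le> d"
  unfolding lin_indep_cols_def using inj_mat_dim_le[of "mat_of_cols d bs" d "length bs"] by auto

lemma col_span_subset: "is_subspace d W \<Longrightarrow> set bs \<subseteq> W \<Longrightarrow> col_span d bs \<subseteq> W"
  unfolding col_span_def using subspace_mat_of_cols_mult by blast

lemma set_subset_col_span:
  fixes bs :: "'a::field vec list"
  assumes "set bs \<subseteq> carrier_vec d"
  shows "set bs \<subseteq> col_span d bs"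
proof
  fix v assume "v \<in> set bs"
  then obtain j where j: "j < length bs" "bs ! j = v" by (auto simp: in_set_conv_nth)
  have "mat_of_cols d bs *\<^sub>v unit_vec (length bs) j = col (mat_of_cols d bs) j"
    using j by (intro eq_vecI) (auto simp: mult_mat_vec_def)
  also have "\<dots> = v" using j assms by (subst col_mat_of_cols) auto
  finally have "mat_of_cols d bs *\<^sub>v unit_vec (length bs) j = v" .
  then show "v \<in> col_span d bs" unfolding col_span_def by (metis image_eqI unit_vec_carrier)
qed

lemma lin_indep_cols_snoc:
  fixes bs :: "'a::field vec list"
  assumes ind: "lin_indep_cols d bs" and v: "v \<in> carrier_vec d" and nv: "v \<notin> col_span d bs"
  shows "lin_indep_cols d (bs @ [v])"
proof -
  have bsc: "set bs \<subseteq> carrier_vec d" and inj: "inj_mat (mat_of_cols d bs)"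
    using ind by (auto simp: lin_indep_cols_def)
  have "c = 0\<^sub>v (length bs + 1)"
    if c: "c \<in> carrier_vec (length bs + 1)" and z: "mat_of_cols d (bs @ [v]) *\<^sub>v c = 0\<^sub>v d" for c
  proof -
    define c1 where "c1 = vec (length bs) (\<lambda>i. c $ i)"
    let ?M = "mat_of_cols d bs" and ?t = "c $ length bs"
    have eq: "?M *\<^sub>v c1 + ?t \<cdot>\<^sub>v v = 0\<^sub>v d"
      using z mat_of_cols_append_mult[of bs d "[v]" c] bsc v c
      by (simp add: mat_of_cols_single_mult c1_def)
    have "?M *\<^sub>v c1 = ?M *\<^sub>v c1 + ?t \<cdot>\<^sub>v v + - (?t \<cdot>\<^sub>v v)" using v by auto
    then have Mc1: "?M *\<^sub>v c1 = - (?t \<cdot>\<^sub>v v)" using eq v by auto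
    have t: "?t = 0"
    proof (rule ccontr)
      assume ne: "?t \<noteq> 0"
      have "?M *\<^sub>v ((- inverse ?t) \<cdot>\<^sub>v c1) = (- inverse ?t) \<cdot>\<^sub>v (?M *\<^sub>v c1)"
        by (rule mult_mat_vec) (auto simp: c1_def)
      also have "\<dots> = v" using Mc1 ne v by (auto simp: smult_smult_assoc)
      finally have "v \<in> col_span d bs" unfolding col_span_def c1_def by (metis image_eqI smult_carrier_vec vec_carrier)
      with nv show False by simp
    qed
    have "?M *\<^sub>v c1 = 0\<^sub>v d" using Mc1 t v by auto
    then have "c1 = 0\<^sub>v (length bs)" using inj unfolding inj_mat_def c1_def by auto
    show ?thesis
    proof (rule eq_vecI)
      fix i assume "i < dim_vec (0\<^sub>v (length bs + 1) :: 'a vec)"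
      then consider "i < length bs" | "i = length bs" by fastforce
      then show "c $ i = 0\<^sub>v (length bs + 1) $ i"
      proof cases
        case 1
        then have "c1 $ i = c $ i" unfolding c1_def by simp
        with \<open>c1 = 0\<^sub>v (length bs)\<close> 1 show ?thesis by auto
      qed (use t in auto)
    qed (use c in auto)
  qed
  then show ?thesis using bsc v unfolding lin_indep_cols_def inj_mat_def by auto
qed

lemma lin_indep_cols_extend:
  fixes bs :: "'a::field vec list"
  assumes Y: "is_subspace d Y" and "lin_indep_cols d bs" and "set bs \<subseteq> Y"
  shows "\<exists>ys. set ys \<subseteq> Y \<and> lin_indep_cols d (bs @ ys) \<and> col_span d (bs @ ys) = Y"
  using assms(2,3)
proof (induction "d - length bs" arbitrary: bs rule: less_induct)
  case less
  show ?case
  proof (cases "Y \<subseteq> col_span d bs")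
    case True
    then show ?thesis using col_span_subset[OF Y less.prems(2)] less.prems by (intro exI[of _ "[]"]) auto
  next
    case False
    then obtain v where v: "v \<in> Y" "v \<notin> col_span d bs" by auto
    have ind': "lin_indep_cols d (bs @ [v])"
      using lin_indep_cols_snoc less.prems(1) v subspace_carrier[OF Y] by blast
    then have "d - length (bs @ [v]) < d - length bs" using lin_indep_cols_length[OF ind'] by simp
    from less.hyps[OF this ind'] less.prems(2) v(1) obtain ys where
      "set ys \<subseteq> Y" "lin_indep_cols d (bs @ [v] @ ys)" "col_span d (bs @ [v] @ ys) = Y" by auto
    then show ?thesis using v(1) by (intro exI[of _ "v # ys"]) auto
  qed
qed

definition subspace_dim :: "nat \<Rightarrow> 'a::field vec set \<Rightarrow> nat" where
  "subspace_dim d W = Max {length bs | bs. lin_indep_cols d bs \<and> set bs \<subseteq> W}"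

lemma finite_indep_lengths: "finite {length bs | bs. lin_indep_cols d bs \<and> set bs \<subseteq> (W :: 'a::field vec set)}"
  by (rule finite_subset[of _ "{..d}"]) (auto dest: lin_indep_cols_length)

lemma subspace_dim_ge:
  "lin_indep_cols d bs \<Longrightarrow> set bs \<subseteq> W \<Longrightarrow> length bs \<le> subspace_dim d (W :: 'a::field vec set)"
  unfolding subspace_dim_def by (rule Max_ge[OF finite_indep_lengths]) blast

lemma subspace_dim_attained:
  obtains bs where "lin_indep_cols d bs" "set bs \<subseteq> W" "length bs = subspace_dim d (W :: 'a::field vec set)"
proof -
  have "{length bs | bs. lin_indep_cols d bs \<and> set bs \<subseteq> W} \<noteq> {}"
    using lin_indep_cols_Nil[of d] by force
  from Max_in[OF finite_indep_lengths this] show ?thesis using that unfolding subspace_dim_def by auto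
qed

lemma subspace_dim_le: "subspace_dim d (W :: 'a::field vec set) \<le> d"
  by (metis subspace_dim_attained lin_indep_cols_length)

lemma subspace_dim_strict_mono:
  fixes X Y :: "'a::field vec set"
  assumes X: "is_subspace d X" and Y: "is_subspace d Y" and XY: "X \<subset> Y"
  shows "subspace_dim d X < subspace_dim d Y"
proof -
  obtain bs where bs: "lin_indep_cols d bs" "set bs \<subseteq> X" "length bs = subspace_dim d X"
    using subspace_dim_attained by blast
  obtain y where y: "y \<in> Y" "y \<notin> X" using XY by blast
  have "X \<subseteq> col_span d bs"
  proof
    fix x assume x: "x \<in> X"
    show "x \<in> col_span d bs"
    proof (rule ccontr)
      assume "x \<notin> col_span d bs"
      then have "lin_indep_cols d (bs @ [x])"
        using lin_indep_cols_snoc[OF bs(1)] x subspace_carrier[OF X] by blast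
      then have "length (bs @ [x]) \<le> subspace_dim d X" by (rule subspace_dim_ge) (use bs(2) x in auto)
      then show False using bs(3) by simp
    qed
  qed
  then have "y \<notin> col_span d bs" using col_span_subset[OF X bs(2)] y by blast
  then have "lin_indep_cols d (bs @ [y])" using lin_indep_cols_snoc[OF bs(1)] y subspace_carrier[OF Y] by blast
  then have "length (bs @ [y]) \<le> subspace_dim d Y" by (rule subspace_dim_ge) (use bs(2) y XY in auto)
  then show ?thesis using bs(3) by simp
qed

lemma flag_basis:
  fixes Xs :: "nat \<Rightarrow> 'a::field vec set"
  assumes sub: "\<forall>i\<le>k. is_subspace d (Xs i)" and mono: "\<forall>i<k. Xs i \<subseteq> Xs (Suc i)"
  shows "\<exists>bs a. lin_indep_cols d bs \<and> (\<forall>i\<le>k. a i \<le> length bs \<and> col_span d (take (a i) bs) = Xs i)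
            \<and> (\<forall>i<k. a i \<le> a (Suc i)) \<and> a k = length bs"
  using sub mono
proof (induction k)
  case 0
  obtain ys where ys: "lin_indep_cols d ys" "col_span d ys = Xs 0"
    using lin_indep_cols_extend[of d "Xs 0" "[]"] 0 lin_indep_cols_Nil by auto
  show ?case by (rule exI[of _ ys], rule exI[of _ "\<lambda>_. length ys"]) (use ys in auto)
next
  case (Suc k)
  then obtain bs a where bs: "lin_indep_cols d bs"
    "\<forall>i\<le>k. a i \<le> length bs \<and> col_span d (take (a i) bs) = Xs i"
    "\<forall>i<k. a i \<le> a (Suc i)" "a k = length bs" by auto
  have "set bs \<subseteq> col_span d bs" using bs(1) set_subset_col_span by (auto simp: lin_indep_cols_def)
  also have "col_span d bs = Xs k" using bs(2,4) by auto
  also have "\<dots> \<subseteq> Xs (Suc k)" using Suc.prems by auto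
  finally obtain ys where ys: "lin_indep_cols d (bs @ ys)" "col_span d (bs @ ys) = Xs (Suc k)"
    using lin_indep_cols_extend[of d "Xs (Suc k)" bs] Suc.prems bs(1) by auto
  show ?case
    using bs ys by (intro exI[of _ "bs @ ys"] exI[of _ "a(Suc k := length (bs @ ys))"])
      (auto simp: le_Suc_eq less_Suc_eq)
qed

text \<open>Here Ti is the inverse of a basis matrix T: coord_prefix d Ti a is the span of the first a
  columns of T, described by the vanishing of the remaining coordinates.\<close>
definition coord_prefix :: "nat \<Rightarrow> 'a::field mat \<Rightarrow> nat \<Rightarrow> 'a vec set" where
  "coord_prefix d Ti a = {v \<in> carrier_vec d. \<forall>k. a \<le> k \<longrightarrow> k < d \<longrightarrow> (Ti *\<^sub>v v) $ k = 0}"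

lemma coord_prefix_mono: "a \<le> b \<Longrightarrow> coord_prefix d Ti a \<subseteq> coord_prefix d Ti b"
  unfolding coord_prefix_def by auto

lemma col_span_take_eq_coord_prefix:
  fixes bs :: "'a::field vec list"
  assumes bsc: "set bs \<subseteq> carrier_vec d" and len: "length bs = d"
    and Ti: "Ti \<in> carrier_mat d d" and inv1: "mat_of_cols d bs * Ti = 1\<^sub>m d" and inv2: "Ti * mat_of_cols d bs = 1\<^sub>m d"
    and a: "a \<le> d"
  shows "col_span d (take a bs) = coord_prefix d Ti a"
proof -
  let ?T = "mat_of_cols d bs"
  have T: "?T \<in> carrier_mat d d" using len mat_of_cols_carrier(1)[of d bs] by simp
  have tk: "set (take a bs) \<subseteq> carrier_vec d" and dr: "set (drop a bs) \<subseteq> carrier_vec d"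
    using bsc by (meson set_take_subset set_drop_subset subset_trans)+
  have lt: "length (take a bs) = a" and ld: "length (drop a bs) = d - a" using len a by auto
  have split: "?T *\<^sub>v w = mat_of_cols d (take a bs) *\<^sub>v vec a (\<lambda>i. w $ i)
      + mat_of_cols d (drop a bs) *\<^sub>v vec (d - a) (\<lambda>i. w $ (a + i))" if "w \<in> carrier_vec d" for w
    using mat_of_cols_append_mult[OF tk dr, of w] that lt ld a by simp
  have TiT: "Ti *\<^sub>v (?T *\<^sub>v w) = w" if "w \<in> carrier_vec d" for w
    using that Ti T inv2 by (metis assoc_mult_mat_vec one_mult_mat_vec)
  have TTi: "?T *\<^sub>v (Ti *\<^sub>v v) = v" if "v \<in> carrier_vec d" for v
    using that Ti T inv1 by (metis assoc_mult_mat_vec one_mult_mat_vec)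
  have tail_zero: "mat_of_cols d (drop a bs) *\<^sub>v vec (d - a) (\<lambda>i. w $ (a + i)) = 0\<^sub>v d"
    if "\<forall>k. a \<le> k \<longrightarrow> k < d \<longrightarrow> w $ k = 0" for w
  proof -
    have "vec (d - a) (\<lambda>i. w $ (a + i)) = 0\<^sub>v (d - a)" using that by (intro eq_vecI) auto
    then show ?thesis using ld by (simp add: mat_of_cols_carrier(1)[of d "drop a bs", simplified ld])
  qed
  show ?thesis
  proof (intro equalityI subsetI)
    fix v assume "v \<in> col_span d (take a bs)"
    then obtain c where c: "c \<in> carrier_vec a" "v = mat_of_cols d (take a bs) *\<^sub>v c"
      unfolding col_span_def using lt by auto
    define w where "w = vec d (\<lambda>k. if k < a then c $ k else 0)"
    have w: "w \<in> carrier_vec d" unfolding w_def by simp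
    have "vec a (\<lambda>i. w $ i) = c" using c(1) a by (intro eq_vecI) (auto simp: w_def)
    then have "?T *\<^sub>v w = v" using split[OF w] tail_zero[of w] c by (simp add: w_def)
    then have "Ti *\<^sub>v v = w" using TiT w by auto
    then show "v \<in> coord_prefix d Ti a" unfolding coord_prefix_def using c by (auto simp: w_def)
  next
    fix v assume v: "v \<in> coord_prefix d Ti a"
    then have vc: "v \<in> carrier_vec d" by (simp add: coord_prefix_def)
    have "v = mat_of_cols d (take a bs) *\<^sub>v vec a (\<lambda>i. (Ti *\<^sub>v v) $ i)"
      using split[of "Ti *\<^sub>v v"] tail_zero[of "Ti *\<^sub>v v"] TTi[OF vc] v Ti vc
      by (simp add: coord_prefix_def)
    then show "v \<in> col_span d (take a bs)" unfolding col_span_def using lt by (metis image_eqI vec_carrier)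
  qed
qed

theorem adapted_basis:
  fixes Xs :: "nat \<Rightarrow> 'a::field vec set"
  assumes sub: "\<forall>i\<le>k. is_subspace d (Xs i)" and mono: "\<forall>i<k. Xs i \<subseteq> Xs (Suc i)"
    and top: "Xs k = carrier_vec d"
  obtains T Ti a where "T \<in> carrier_mat d d" "Ti \<in> carrier_mat d d" "T * Ti = 1\<^sub>m d" "Ti * T = 1\<^sub>m d"
    "\<forall>i\<le>k. a i \<le> d \<and> Xs i = coord_prefix d Ti (a i)" "\<forall>i<k. a i \<le> a (Suc i)" "a k = d"
proof -
  obtain bs a where bs: "lin_indep_cols d bs" "\<forall>i\<le>k. a i \<le> length bs \<and> col_span d (take (a i) bs) = Xs i"
    "\<forall>i<k. a i \<le> a (Suc i)" "a k = length bs"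
    using flag_basis[OF sub mono] by blast
  have bsc: "set bs \<subseteq> carrier_vec d" and inj: "inj_mat (mat_of_cols d bs)"
    using bs(1) by (auto simp: lin_indep_cols_def)
  have "col_span d bs = carrier_vec d" using bs(2,4) top by (metis order_refl take_all)
  then have "d \<le> length bs"
    using surj_mat_dim_le[OF mat_of_cols_carrier(1)] unfolding col_span_def by blast
  then have len: "length bs = d" using lin_indep_cols_length[OF bs(1)] by simp
  then have T: "mat_of_cols d bs \<in> carrier_mat d d" using mat_of_cols_carrier(1)[of d bs] by simp
  obtain Ti where Ti: "Ti \<in> carrier_mat d d" "mat_of_cols d bs * Ti = 1\<^sub>m d" "Ti * mat_of_cols d bs = 1\<^sub>m d"
    using inj_mat_square_inverse[OF T inj] by blast
  have "\<forall>i\<le>k. a i \<le> d \<and> Xs i = coord_prefix d Ti (a i)"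
    using bs(2) col_span_take_eq_coord_prefix[OF bsc len Ti] len by auto
  then show ?thesis using that T Ti bs(3,4) len by blast
qed

definition diag_block :: "'a mat \<Rightarrow> nat \<Rightarrow> nat \<Rightarrow> 'a mat" where
  "diag_block M a b = mat (b - a) (b - a) (\<lambda>(i,j). M $$ (a + i, a + j))"

lemma diag_block_carrier[simp]: "diag_block M a b \<in> carrier_mat (b - a) (b - a)"
  unfolding diag_block_def by simp

lemma diag_block_full: "M \<in> carrier_mat d d \<Longrightarrow> diag_block M 0 d = M"
  unfolding diag_block_def by (intro eq_matI) auto

lemma det_diag_block_split:
  fixes N :: "'a::idom mat"
  assumes abc: "a \<le> c" "c \<le> b"
    and z: "\<And>i j. c \<le> i \<Longrightarrow> i < b \<Longrightarrow> a \<le> j \<Longrightarrow> j < c \<Longrightarrow> N $$ (i,j) = 0"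
  shows "det (diag_block N a b) = det (diag_block N a c) * det (diag_block N c b)"
proof -
  define U where "U = mat (c - a) (b - c) (\<lambda>(i,j). N $$ (a + i, c + j))"
  have "diag_block N a b = four_block_mat (diag_block N a c) U (0\<^sub>m (b - c) (c - a)) (diag_block N c b)"
    using abc z by (intro eq_matI)
      (auto simp: four_block_mat_def diag_block_def U_def Let_def add.commute)
  moreover have "det (four_block_mat (diag_block N a c) U (0\<^sub>m (b - c) (c - a)) (diag_block N c b))
      = det (diag_block N a c) * det (diag_block N c b)"
    by (rule det_four_block_mat_lower_left_zero) (auto simp: U_def)
  ultimately show ?thesis by simp
qed

lemma char_poly_diag_block_split:
  fixes M :: "'a::idom mat"
  assumes M: "M \<in> carrier_mat d d" and abc: "a \<le> c" "c \<le> b" "b \<le> d"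
    and z: "\<And>i j. c \<le> i \<Longrightarrow> i < b \<Longrightarrow> a \<le> j \<Longrightarrow> j < c \<Longrightarrow> M $$ (i,j) = 0"
  shows "char_poly (diag_block M a b) = char_poly (diag_block M a c) * char_poly (diag_block M c b)"
proof -
  have blk: "char_poly_matrix (diag_block M x y) = diag_block (char_poly_matrix M) x y" if "y \<le> d" for x y
    using M that by (intro eq_matI) (auto simp: char_poly_matrix_def diag_block_def)
  have "det (diag_block (char_poly_matrix M) a b)
      = det (diag_block (char_poly_matrix M) a c) * det (diag_block (char_poly_matrix M) c b)"
    by (rule det_diag_block_split[OF abc(1,2)]) (use z M abc in \<open>auto simp: char_poly_matrix_def\<close>)
  then show ?thesis unfolding char_poly_def using abc by (simp add: blk)
qed

lemma char_poly_diag_blocks: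
  fixes M :: "'a::idom mat"
  assumes M: "M \<in> carrier_mat d d" and a0: "a 0 = 0" and mono: "\<forall>t<k. a t \<le> a (Suc t)" and ak: "a k \<le> d"
    and z: "\<And>t i j. t \<le> k \<Longrightarrow> a t \<le> i \<Longrightarrow> i < d \<Longrightarrow> j < a t \<Longrightarrow> M $$ (i,j) = 0"
  shows "char_poly (diag_block M 0 (a k)) = (\<Prod>t<k. char_poly (diag_block M (a t) (a (Suc t))))"
  using mono ak z
proof (induction k)
  case 0
  have "diag_block M 0 0 = (1\<^sub>m 0 :: 'a mat)" by (intro eq_matI) (auto simp: diag_block_def)
  then show ?case using a0 by (simp add: char_poly_def char_poly_matrix_def det_def)
next
  case (Suc k)
  have le: "a k \<le> a (Suc k)" using Suc.prems by auto
  have "char_poly (diag_block M 0 (a (Suc k)))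
      = char_poly (diag_block M 0 (a k)) * char_poly (diag_block M (a k) (a (Suc k)))"
    by (rule char_poly_diag_block_split[OF M _ le Suc.prems(2)]) (use Suc.prems(3)[of k] Suc.prems(2) in auto)
  moreover have "char_poly (diag_block M 0 (a k)) = (\<Prod>t<k. char_poly (diag_block M (a t) (a (Suc t))))"
  proof (rule Suc.IH)
    fix t i j assume "t \<le> k" "a t \<le> i" "i < d" "j < a t"
    then show "M $$ (i,j) = 0" using Suc.prems(3)[of t i j] by simp
  qed (use Suc.prems le in auto)
  ultimately show ?case by simp
qed

section \<open>Matrix representations, submodules and factors\<close>

definition mat_valued :: "('g, 'm) monoid_scheme \<Rightarrow> nat \<Rightarrow> ('g \<Rightarrow> 'f::field mat) \<Rightarrow> bool" where
  "mat_valued G d \<rho> \<longleftrightarrow> (\<forall>g\<in>carrier G. \<rho> g \<in> carrier_mat d d)"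

lemma is_rep_mat_valued: "is_rep G d \<rho> \<Longrightarrow> mat_valued G d \<rho>"
  by (simp add: is_rep_def mat_valued_def)

lemma mult_mat_mat_mat_vec:
  fixes A :: "'a::field mat"
  assumes "A \<in> carrier_mat d d" "B \<in> carrier_mat d d" "C \<in> carrier_mat d d" "u \<in> carrier_vec d"
  shows "(A * B * C) *\<^sub>v u = A *\<^sub>v (B *\<^sub>v (C *\<^sub>v u))"
  using assms by (simp add: assoc_mult_mat_vec[of _ d d _ d])

lemma sum_lessThan_support_interval:
  fixes f :: "nat \<Rightarrow> 'a::comm_monoid_add"
  assumes "a \<le> b" "b \<le> d" and z: "\<And>k. k < d \<Longrightarrow> (k < a \<or> b \<le> k) \<Longrightarrow> f k = 0"
  shows "(\<Sum>k<d. f k) = (\<Sum>j<b-a. f (a + j))"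
proof -
  have d: "d = a + ((b - a) + (d - b))" using assms by simp
  have "(\<Sum>k<d. f k) = (\<Sum>k<a. f k) + ((\<Sum>j<b-a. f (a + j)) + (\<Sum>j<d-b. f (a + (b - a) + j)))"
    by (subst d, subst sum_lessThan_add_split, subst sum_lessThan_add_split) (simp add: add.assoc)
  also have "(\<Sum>k<a. f k) = 0" using z assms by (intro sum.neutral) auto
  also have "(\<Sum>j<d-b. f (a + (b - a) + j)) = 0" using z assms by (intro sum.neutral) auto
  finally show ?thesis by simp
qed

locale adapted_basis =
  fixes d :: nat and T Ti :: "'f::field mat"
  assumes T: "T \<in> carrier_mat d d" and Ti: "Ti \<in> carrier_mat d d"
    and TTi: "T * Ti = 1\<^sub>m d" and TiT: "Ti * T = 1\<^sub>m d"
begin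

lemma Ti_T_mult_vec: "w \<in> carrier_vec d \<Longrightarrow> Ti *\<^sub>v (T *\<^sub>v w) = w"
  using T Ti TiT by (metis assoc_mult_mat_vec one_mult_mat_vec)

lemma T_Ti_mult_vec: "w \<in> carrier_vec d \<Longrightarrow> T *\<^sub>v (Ti *\<^sub>v w) = w"
  using T Ti TTi by (metis assoc_mult_mat_vec one_mult_mat_vec)

lemma T_unit_vec_in_coord_prefix: "k < a \<Longrightarrow> k < d \<Longrightarrow> T *\<^sub>v unit_vec d k \<in> coord_prefix d Ti a"
  unfolding coord_prefix_def using Ti_T_mult_vec[of "unit_vec d k"] T by auto

lemma coord_prefix_eq_zero_imp_0:
  assumes "coord_prefix d Ti a = {0\<^sub>v d}" "a \<le> d"
  shows "a = 0"
proof (rule ccontr)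
  assume "a \<noteq> 0"
  then have "T *\<^sub>v unit_vec d 0 = 0\<^sub>v d" using T_unit_vec_in_coord_prefix[of 0 a] assms by auto
  then have "unit_vec d 0 = (0\<^sub>v d :: 'f vec)" using Ti_T_mult_vec[of "unit_vec d 0"] Ti by simp
  then show False using \<open>a \<noteq> 0\<close> assms(2) by simp
qed

lemma conj_diag_block_zero:
  assumes A: "A \<in> carrier_mat d d" and inv: "\<forall>x\<in>coord_prefix d Ti a. A *\<^sub>v x \<in> coord_prefix d Ti a"
    and "k < a" "a \<le> i" "i < d"
  shows "(Ti * A * T) $$ (i,k) = 0"
proof -
  have kd: "k < d" using assms by simp
  have "(Ti * A * T) $$ (i,k) = ((Ti * A * T) *\<^sub>v unit_vec d k) $ i"
    using T Ti A kd assms by (simp add: mult_mat_vec_unit_vec_index)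
  also have "\<dots> = (Ti *\<^sub>v (A *\<^sub>v (T *\<^sub>v unit_vec d k))) $ i"
    using T Ti A kd by (subst mult_mat_mat_mat_vec) auto
  also have "\<dots> = 0"
  proof -
    have "T *\<^sub>v unit_vec d k \<in> coord_prefix d Ti a" using assms kd by (intro T_unit_vec_in_coord_prefix)
    then show ?thesis using inv assms unfolding coord_prefix_def by blast
  qed
  finally show ?thesis .
qed

definition coord_proj :: "nat \<Rightarrow> nat \<Rightarrow> 'f mat" where
  "coord_proj a b = mat (b - a) d (\<lambda>(i,j). Ti $$ (a + i, j))"

lemma coord_proj_carrier: "coord_proj a b \<in> carrier_mat (b - a) d"
  unfolding coord_proj_def by simp

lemma coord_proj_mult_carrier[simp]: "coord_proj a b *\<^sub>v w \<in> carrier_vec (b - a)"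
  by (rule carrier_vecI) (simp add: coord_proj_def)

lemma coord_proj_index:
  assumes "w \<in> carrier_vec d" "i < b - a" "b \<le> d"
  shows "(coord_proj a b *\<^sub>v w) $ i = (Ti *\<^sub>v w) $ (a + i)"
proof -
  have "(coord_proj a b *\<^sub>v w) $ i = (\<Sum>j<d. Ti $$ (a + i,j) * w $ j)"
    using assms coord_proj_carrier[of a b] by (subst mult_mat_vec_index_sum) (auto simp: coord_proj_def)
  also have "\<dots> = (Ti *\<^sub>v w) $ (a + i)" using assms Ti by (subst mult_mat_vec_index_sum) auto
  finally show ?thesis .
qed

lemma coord_proj_image:
  assumes "a \<le> b" "b \<le> d"
  shows "(\<lambda>w. coord_proj a b *\<^sub>v w) ` coord_prefix d Ti b = carrier_vec (b - a)"
proof (intro equalityI subsetI)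
  fix x assume "x \<in> (\<lambda>w. coord_proj a b *\<^sub>v w) ` coord_prefix d Ti b"
  then show "x \<in> carrier_vec (b - a)" by auto
next
  fix x :: "'f vec" assume x: "x \<in> carrier_vec (b - a)"
  define c where "c = vec d (\<lambda>k. if a \<le> k \<and> k < b then x $ (k - a) else 0)"
  have c: "c \<in> carrier_vec d" unfolding c_def by simp
  have "T *\<^sub>v c \<in> coord_prefix d Ti b"
    unfolding coord_prefix_def using Ti_T_mult_vec[OF c] T by (auto simp: c_def)
  moreover have "coord_proj a b *\<^sub>v (T *\<^sub>v c) = x"
    using T assms c x Ti_T_mult_vec[OF c] coord_proj_carrier
    by (intro eq_vecI) (auto simp: coord_proj_index c_def)
  ultimately show "x \<in> (\<lambda>w. coord_proj a b *\<^sub>v w) ` coord_prefix d Ti b" by force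
qed

lemma coord_proj_kernel:
  assumes ab: "a \<le> b" "b \<le> d"
  shows "{w \<in> coord_prefix d Ti b. coord_proj a b *\<^sub>v w = 0\<^sub>v (b - a)} = coord_prefix d Ti a"
proof (intro equalityI subsetI)
  fix w assume w: "w \<in> {w \<in> coord_prefix d Ti b. coord_proj a b *\<^sub>v w = 0\<^sub>v (b - a)}"
  have "(Ti *\<^sub>v w) $ k = 0" if "a \<le> k" "k < d" for k
  proof (cases "k < b")
    case True
    have "(coord_proj a b *\<^sub>v w) $ (k - a) = (Ti *\<^sub>v w) $ (a + (k - a))"
      using w True that ab by (intro coord_proj_index) (auto simp: coord_prefix_def)
    then show ?thesis using w True that by simp
  qed (use w that in \<open>auto simp: coord_prefix_def\<close>)
  then show "w \<in> coord_prefix d Ti a" using w by (simp add: coord_prefix_def)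
next
  fix w assume w: "w \<in> coord_prefix d Ti a"
  then have "coord_proj a b *\<^sub>v w = 0\<^sub>v (b - a)"
    using ab coord_proj_carrier by (intro eq_vecI) (auto simp: coord_proj_index coord_prefix_def)
  then show "w \<in> {w \<in> coord_prefix d Ti b. coord_proj a b *\<^sub>v w = 0\<^sub>v (b - a)}"
    using w coord_prefix_mono[OF ab(1)] by blast
qed

lemma coord_proj_intertwines:
  assumes A: "A \<in> carrier_mat d d" and ab: "a \<le> b" "b \<le> d"
    and inv: "\<forall>x\<in>coord_prefix d Ti a. A *\<^sub>v x \<in> coord_prefix d Ti a"
    and w: "w \<in> coord_prefix d Ti b"
  shows "coord_proj a b *\<^sub>v (A *\<^sub>v w) = diag_block (Ti * A * T) a b *\<^sub>v (coord_proj a b *\<^sub>v w)"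
proof (rule eq_vecI)
  define M where "M = Ti * A * T"
  have M: "M \<in> carrier_mat d d" unfolding M_def using T Ti A by simp
  have wc: "w \<in> carrier_vec d" using w by (simp add: coord_prefix_def)
  define c where "c = Ti *\<^sub>v w"
  have c: "c \<in> carrier_vec d" unfolding c_def using Ti wc by simp
  have "Ti *\<^sub>v (A *\<^sub>v w) = Ti *\<^sub>v (A *\<^sub>v (T *\<^sub>v c))" unfolding c_def using T_Ti_mult_vec[OF wc] by simp
  also have "\<dots> = M *\<^sub>v c" unfolding M_def using T Ti A c by (subst mult_mat_mat_mat_vec) auto
  finally have key: "Ti *\<^sub>v (A *\<^sub>v w) = M *\<^sub>v c" .
  fix i assume "i < dim_vec (diag_block (Ti * A * T) a b *\<^sub>v (coord_proj a b *\<^sub>v w))"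
  then have i: "i < b - a" by (simp add: diag_block_def)
  have "(coord_proj a b *\<^sub>v (A *\<^sub>v w)) $ i = (M *\<^sub>v c) $ (a + i)"
    using coord_proj_index[of "A *\<^sub>v w" i b a] A wc i ab key by simp
  also have "\<dots> = (\<Sum>k<d. M $$ (a + i, k) * c $ k)"
    using M c i ab by (subst mult_mat_vec_index_sum) auto
  also have "\<dots> = (\<Sum>j<b - a. M $$ (a + i, a + j) * c $ (a + j))"
  proof (rule sum_lessThan_support_interval[OF ab])
    fix k assume "k < d" "k < a \<or> b \<le> k"
    then show "M $$ (a + i, k) * c $ k = 0"
      using conj_diag_block_zero[OF A inv, of k "a + i"] w i ab unfolding M_def c_def coord_prefix_def by auto
  qed
  also have "\<dots> = (\<Sum>j<b - a. diag_block M a b $$ (i, j) * (coord_proj a b *\<^sub>v w) $ j)"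
    using i ab wc by (intro sum.cong) (auto simp: diag_block_def coord_proj_index c_def)
  also have "\<dots> = (diag_block M a b *\<^sub>v (coord_proj a b *\<^sub>v w)) $ i"
    using i by (subst mult_mat_vec_index_sum[of i "diag_block M a b"]) (auto simp: diag_block_def coord_proj_def)
  finally show "(coord_proj a b *\<^sub>v (A *\<^sub>v w)) $ i = (diag_block (Ti * A * T) a b *\<^sub>v (coord_proj a b *\<^sub>v w)) $ i"
    unfolding M_def .
qed (auto simp: diag_block_def coord_proj_def)

lemma factor_iso_diag_block:
  assumes r: "mat_valued G d \<rho>" and ab: "a \<le> b" "b \<le> d"
    and inv: "\<forall>g\<in>carrier G. \<forall>x\<in>coord_prefix d Ti a. \<rho> g *\<^sub>v x \<in> coord_prefix d Ti a"
  shows "factor_iso G d \<rho> (coord_prefix d Ti a) (coord_prefix d Ti b) (b - a) (\<lambda>g. diag_block (Ti * \<rho> g * T) a b)"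
  unfolding factor_iso_def
proof (intro bexI[of _ "coord_proj a b"] conjI ballI)
  fix g w assume "g \<in> carrier G" "w \<in> coord_prefix d Ti b"
  then show "coord_proj a b *\<^sub>v (\<rho> g *\<^sub>v w) = diag_block (Ti * \<rho> g * T) a b *\<^sub>v (coord_proj a b *\<^sub>v w)"
    using r inv by (intro coord_proj_intertwines[OF _ ab]) (auto simp: mat_valued_def)
qed (use coord_proj_carrier coord_proj_image[OF ab] coord_proj_kernel[OF ab] in auto)

end

lemma submodule_subspace: "is_submodule G d \<rho> W \<Longrightarrow> is_subspace d W"
  by (simp add: is_submodule_def)

lemma submodule_carrier: "is_submodule G d \<rho> W \<Longrightarrow> W \<subseteq> carrier_vec d"
  by (simp add: is_submodule_def is_subspace_def)

lemma zero_submodule: "mat_valued G d \<rho> \<Longrightarrow> is_submodule G d \<rho> {0\<^sub>v d}"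
  unfolding is_submodule_def is_subspace_def mat_valued_def by auto

lemma carrier_submodule: "mat_valued G d \<rho> \<Longrightarrow> is_submodule G d \<rho> (carrier_vec d)"
  unfolding is_submodule_def is_subspace_def mat_valued_def by auto

lemma submodule_Int:
  "is_submodule G d \<rho> U \<Longrightarrow> is_submodule G d \<rho> W \<Longrightarrow> is_submodule G d \<rho> (U \<inter> W)"
  unfolding is_submodule_def is_subspace_def by auto

definition subspace_sum :: "'a vec set \<Rightarrow> 'a vec set \<Rightarrow> 'a::field vec set" where
  "subspace_sum U W = {u + w | u w. u \<in> U \<and> w \<in> W}"

lemma subspace_sum_left: "is_subspace d W \<Longrightarrow> U \<subseteq> carrier_vec d \<Longrightarrow> U \<subseteq> subspace_sum U W"
proof
  fix u assume "is_subspace d W" "U \<subseteq> carrier_vec d" "u \<in> U"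
  then have "u = u + 0\<^sub>v d" "0\<^sub>v d \<in> W" by (auto simp: is_subspace_def)
  with \<open>u \<in> U\<close> show "u \<in> subspace_sum U W" unfolding subspace_sum_def by blast
qed

lemma subspace_sum_right: "is_subspace d U \<Longrightarrow> W \<subseteq> carrier_vec d \<Longrightarrow> W \<subseteq> subspace_sum U W"
proof
  fix w assume "is_subspace d U" "W \<subseteq> carrier_vec d" "w \<in> W"
  then have "w = 0\<^sub>v d + w" "0\<^sub>v d \<in> U" by (auto simp: is_subspace_def)
  with \<open>w \<in> W\<close> show "w \<in> subspace_sum U W" unfolding subspace_sum_def by blast
qed

lemma subspace_sum_least: "is_subspace d Y \<Longrightarrow> U \<subseteq> Y \<Longrightarrow> W \<subseteq> Y \<Longrightarrow> subspace_sum U W \<subseteq> Y"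
  unfolding subspace_sum_def is_subspace_def by blast

lemma submodule_sum:
  fixes \<rho> :: "'g \<Rightarrow> 'a::field mat"
  assumes r: "mat_valued G d \<rho>" and U: "is_submodule G d \<rho> U" and W: "is_submodule G d \<rho> W"
  shows "is_submodule G d \<rho> (subspace_sum U W)"
proof -
  have Us: "is_subspace d U" and Ws: "is_subspace d W" using U W by (auto simp: is_submodule_def)
  have Uc: "U \<subseteq> carrier_vec d" and Wc: "W \<subseteq> carrier_vec d" using Us Ws by (auto simp: is_subspace_def)
  have sub: "is_subspace d (subspace_sum U W)" unfolding is_subspace_def
  proof (intro conjI ballI allI)
    show "subspace_sum U W \<subseteq> carrier_vec d" using Uc Wc unfolding subspace_sum_def by (auto intro: add_carrier_vec)
    have "0\<^sub>v d = 0\<^sub>v d + (0\<^sub>v d :: 'a vec)" by (intro eq_vecI) auto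
    then show "0\<^sub>v d \<in> subspace_sum U W" using Us Ws unfolding subspace_sum_def is_subspace_def by blast
  next
    fix x y assume x: "x \<in> subspace_sum U W" and y: "y \<in> subspace_sum U W"
    then obtain u1 w1 u2 w2 where uw: "x = u1 + w1" "y = u2 + w2" "u1 \<in> U" "w1 \<in> W" "u2 \<in> U" "w2 \<in> W"
      unfolding subspace_sum_def by blast
    have c: "u1 \<in> carrier_vec d" "w1 \<in> carrier_vec d" "u2 \<in> carrier_vec d" "w2 \<in> carrier_vec d"
      using uw Uc Wc by auto
    have "x + y = (u1 + u2) + (w1 + w2)" unfolding uw using c by (intro eq_vecI) auto
    moreover have "u1 + u2 \<in> U" "w1 + w2 \<in> W" using uw Us Ws by (auto simp: is_subspace_def)
    ultimately show "x + y \<in> subspace_sum U W" unfolding subspace_sum_def by blast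
  next
    fix a :: 'a and x assume x: "x \<in> subspace_sum U W"
    then obtain u w where uw: "x = u + w" "u \<in> U" "w \<in> W" unfolding subspace_sum_def by blast
    have c: "u \<in> carrier_vec d" "w \<in> carrier_vec d" using uw Uc Wc by auto
    have "a \<cdot>\<^sub>v x = a \<cdot>\<^sub>v u + a \<cdot>\<^sub>v w" unfolding uw using c by (simp add: smult_add_distrib_vec)
    moreover have "a \<cdot>\<^sub>v u \<in> U" "a \<cdot>\<^sub>v w \<in> W" using uw Us Ws by (auto simp: is_subspace_def)
    ultimately show "a \<cdot>\<^sub>v x \<in> subspace_sum U W" unfolding subspace_sum_def by blast
  qed
  have "\<forall>g\<in>carrier G. \<forall>x\<in>subspace_sum U W. \<rho> g *\<^sub>v x \<in> subspace_sum U W"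
  proof (intro ballI)
    fix g x assume g: "g \<in> carrier G" and x: "x \<in> subspace_sum U W"
    then obtain u w where uw: "x = u + w" "u \<in> U" "w \<in> W" unfolding subspace_sum_def by blast
    have c: "u \<in> carrier_vec d" "w \<in> carrier_vec d" using uw Uc Wc by auto
    have rg: "\<rho> g \<in> carrier_mat d d" using r g by (simp add: mat_valued_def)
    have "\<rho> g *\<^sub>v x = \<rho> g *\<^sub>v u + \<rho> g *\<^sub>v w" unfolding uw using c rg by (simp add: mult_add_distrib_mat_vec)
    moreover have "\<rho> g *\<^sub>v u \<in> U" "\<rho> g *\<^sub>v w \<in> W" using uw U W g by (auto simp: is_submodule_def)
    ultimately show "\<rho> g *\<^sub>v x \<in> subspace_sum U W" unfolding subspace_sum_def by blast
  qed
  then show ?thesis using sub by (simp add: is_submodule_def)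
qed

lemma preimage_subspace:
  fixes P :: "'a::field mat"
  assumes P: "P \<in> carrier_mat e d" and Y: "is_subspace d Y" and Z: "is_subspace e Z"
  shows "is_subspace d {w \<in> Y. P *\<^sub>v w \<in> Z}"
proof -
  have Yc: "Y \<subseteq> carrier_vec d" using subspace_carrier[OF Y] .
  have "P *\<^sub>v (v + w) \<in> Z" if "v \<in> Y" "w \<in> Y" "P *\<^sub>v v \<in> Z" "P *\<^sub>v w \<in> Z" for v w
  proof -
    have "v \<in> carrier_vec d" "w \<in> carrier_vec d" using that Yc by auto
    then have "P *\<^sub>v (v + w) = P *\<^sub>v v + P *\<^sub>v w" using P by (simp add: mult_add_distrib_mat_vec)
    then show ?thesis using that Z by (simp add: is_subspace_def)
  qed
  moreover have "P *\<^sub>v (a \<cdot>\<^sub>v v) \<in> Z" if "v \<in> Y" "P *\<^sub>v v \<in> Z" for a v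
  proof -
    have "v \<in> carrier_vec d" using that Yc by auto
    then have "P *\<^sub>v (a \<cdot>\<^sub>v v) = a \<cdot>\<^sub>v (P *\<^sub>v v)" using P by (simp add: mult_mat_vec)
    then show ?thesis using that Z by (simp add: is_subspace_def)
  qed
  moreover have "P *\<^sub>v 0\<^sub>v d \<in> Z" using P Z by (simp add: is_subspace_def)
  ultimately show ?thesis using Y Yc unfolding is_subspace_def by auto
qed

lemma invertible_mat_inverse:
  fixes Q :: "'a::field mat"
  assumes "Q \<in> carrier_mat e e" "invertible_mat Q"
  obtains Q' where "Q' \<in> carrier_mat e e" "Q * Q' = 1\<^sub>m e" "Q' * Q = 1\<^sub>m e"
proof -
  obtain Q' where Q': "Q * Q' = 1\<^sub>m e" "Q' * Q = 1\<^sub>m (dim_row Q')"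
    using assms unfolding invertible_mat_def inverts_mat_def by auto
  have "dim_row Q' = e" using Q'(2) assms(1) by (metis carrier_matD(2) index_mult_mat(3) index_one_mat(3))
  moreover have "dim_col Q' = e" using Q'(1) by (metis index_mult_mat(3) index_one_mat(3))
  ultimately show ?thesis using that Q' by auto
qed

lemma rep_iso_char_poly:
  fixes \<sigma> \<sigma>' :: "'g \<Rightarrow> 'f::field mat"
  assumes iso: "rep_iso G e \<sigma> e' \<sigma>'" and c: "mat_valued G e \<sigma>" and c': "mat_valued G e' \<sigma>'"
    and g: "g \<in> carrier G"
  shows "char_poly (\<sigma> g) = char_poly (\<sigma>' g)"
proof -
  obtain Q where e: "e = e'" and Q: "Q \<in> carrier_mat e e" "invertible_mat Q" "Q * \<sigma> g = \<sigma>' g * Q"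
    using iso g unfolding rep_iso_def by blast
  obtain Q' where Q': "Q' \<in> carrier_mat e e" "Q * Q' = 1\<^sub>m e" "Q' * Q = 1\<^sub>m e"
    using invertible_mat_inverse[OF Q(1,2)] .
  have s: "\<sigma> g \<in> carrier_mat e e" and s': "\<sigma>' g \<in> carrier_mat e e"
    using c c' g e by (auto simp: mat_valued_def)
  have "\<sigma>' g = \<sigma>' g * (Q * Q')" using Q'(2) s' by simp
  also have "\<dots> = \<sigma>' g * Q * Q'" using assoc_mult_mat[OF s' Q(1) Q'(1)] by simp
  also have "\<dots> = Q * \<sigma> g * Q'" using Q(3) by simp
  finally have "similar_mat (\<sigma>' g) (\<sigma> g)"
    unfolding similar_mat_def similar_mat_wit_def using Q Q' s s' by (intro exI[of _ Q] exI[of _ Q']) auto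
  then show ?thesis by (simp add: char_poly_similar)
qed

lemma factor_iso_restrict:
  fixes \<rho> :: "'g \<Rightarrow> 'a::field mat"
  assumes fi: "factor_iso G d \<rho> W Y e \<sigma>" and UY: "U \<subseteq> Y" and Yc: "Y \<subseteq> carrier_vec d"
    and span: "\<forall>y\<in>Y. \<exists>u\<in>U. \<exists>w\<in>W. y = u + w"
  shows "factor_iso G d \<rho> (U \<inter> W) U e \<sigma>"
proof -
  obtain P where P: "P \<in> carrier_mat e d" "(\<lambda>w. P *\<^sub>v w) ` Y = carrier_vec e"
    "{w \<in> Y. P *\<^sub>v w = 0\<^sub>v e} = W" "\<forall>g\<in>carrier G. \<forall>w\<in>Y. P *\<^sub>v (\<rho> g *\<^sub>v w) = \<sigma> g *\<^sub>v (P *\<^sub>v w)"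
    using fi unfolding factor_iso_def by blast
  have "(\<lambda>w. P *\<^sub>v w) ` U = carrier_vec e"
  proof (intro equalityI subsetI)
    fix x assume "x \<in> (\<lambda>w. P *\<^sub>v w) ` U" then show "x \<in> carrier_vec e" using P(1) by auto
  next
    fix x :: "'a vec" assume "x \<in> carrier_vec e"
    then obtain y where y: "y \<in> Y" "x = P *\<^sub>v y" using P(2) by (metis imageE)
    then obtain u w where uw: "u \<in> U" "w \<in> W" "y = u + w" using span by blast
    then have "P *\<^sub>v w = 0\<^sub>v e" "u \<in> carrier_vec d" "w \<in> carrier_vec d" using P(3) UY Yc by auto
    then have "x = P *\<^sub>v u" using y uw P(1) by (simp add: mult_add_distrib_mat_vec)
    then show "x \<in> (\<lambda>w. P *\<^sub>v w) ` U" using uw by blast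
  qed
  moreover have "{w \<in> U. P *\<^sub>v w = 0\<^sub>v e} = U \<inter> W" using P(3) UY by blast
  ultimately show ?thesis unfolding factor_iso_def using P(1,4) UY by blast
qed

lemma factor_through_projection:
  fixes P1 P2 :: "'a::field mat"
  assumes P1: "P1 \<in> carrier_mat e1 d" and P2: "P2 \<in> carrier_mat e2 d" and Y: "is_subspace d Y"
    and surj1: "(\<lambda>w. P1 *\<^sub>v w) ` Y = carrier_vec e1"
    and ker1: "{w \<in> Y. P1 *\<^sub>v w = 0\<^sub>v e1} = X" and ker2: "{w \<in> Y. P2 *\<^sub>v w = 0\<^sub>v e2} = X"
  shows "\<exists>R\<in>carrier_mat e2 e1. \<forall>w\<in>Y. R *\<^sub>v (P1 *\<^sub>v w) = P2 *\<^sub>v w"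
proof -
  obtain B where B: "B \<in> carrier_mat d e1" "P1 * B = 1\<^sub>m e1" "\<forall>c\<in>carrier_vec e1. B *\<^sub>v c \<in> Y"
    using right_inverse_into_subspace[OF P1 Y surj1] by blast
  have "(P2 * B) *\<^sub>v (P1 *\<^sub>v w) = P2 *\<^sub>v w" if w: "w \<in> Y" for w
  proof -
    have wc: "w \<in> carrier_vec d" using w subspace_carrier[OF Y] by auto
    define u where "u = B *\<^sub>v (P1 *\<^sub>v w)"
    have u: "u \<in> Y" "u \<in> carrier_vec d" unfolding u_def using B P1 wc by auto
    have "P1 *\<^sub>v u = P1 *\<^sub>v w" unfolding u_def using B P1 wc by (metis assoc_mult_mat_vec one_mult_mat_vec
        mult_mat_vec_carrier)
    then have "P1 *\<^sub>v (w - u) = 0\<^sub>v e1" using P1 wc u by (simp add: mult_minus_distrib_mat_vec)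
    moreover have "w - u \<in> Y" using subspace_diff[OF Y w u(1)] .
    ultimately have "P2 *\<^sub>v (w - u) = 0\<^sub>v e2" using ker1 ker2 by blast
    then have eq0: "P2 *\<^sub>v w - P2 *\<^sub>v u = 0\<^sub>v e2" using P2 wc u by (simp add: mult_minus_distrib_mat_vec)
    have "P2 *\<^sub>v w = P2 *\<^sub>v u"
    proof (rule eq_vecI)
      fix i assume i: "i < dim_vec (P2 *\<^sub>v u)"
      then have "(P2 *\<^sub>v w - P2 *\<^sub>v u) $ i = 0" using eq0 P2 by simp
      then show "(P2 *\<^sub>v w) $ i = (P2 *\<^sub>v u) $ i" using i P2 by simp
    qed (use P2 in simp)
    then show ?thesis unfolding u_def using P2 B P1 wc by (simp add: assoc_mult_mat_vec)
  qed
  moreover have "P2 * B \<in> carrier_mat e2 e1" using P2 B by simp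
  ultimately show ?thesis by blast
qed

lemma mat_eq_on_image:
  fixes A B :: "'a::field mat"
  assumes A: "A \<in> carrier_mat n e" and B: "B \<in> carrier_mat n e" and surj: "(\<lambda>w. P *\<^sub>v w) ` Y = carrier_vec e"
    and eq: "\<And>w. w \<in> Y \<Longrightarrow> A *\<^sub>v (P *\<^sub>v w) = B *\<^sub>v (P *\<^sub>v w)"
  shows "A = B"
proof (rule mat_eq_by_mult_vec[OF A B])
  fix x :: "'a vec" assume "x \<in> carrier_vec e"
  then obtain w where "w \<in> Y" "x = P *\<^sub>v w" using surj by (metis imageE)
  then show "A *\<^sub>v x = B *\<^sub>v x" using eq by simp
qed

lemma factor_iso_unique:
  fixes \<rho> :: "'g \<Rightarrow> 'a::field mat"
  assumes f1: "factor_iso G d \<rho> X Y e1 \<sigma>1" and f2: "factor_iso G d \<rho> X Y e2 \<sigma>2"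
    and c1: "mat_valued G e1 \<sigma>1" and c2: "mat_valued G e2 \<sigma>2"
    and Y: "is_submodule G d \<rho> Y"
  shows "rep_iso G e1 \<sigma>1 e2 \<sigma>2"
proof -
  have Ys: "is_subspace d Y" and Yinv: "\<forall>g\<in>carrier G. \<forall>w\<in>Y. \<rho> g *\<^sub>v w \<in> Y"
    using Y by (auto simp: is_submodule_def)
  obtain P1 where P1: "P1 \<in> carrier_mat e1 d" "(\<lambda>w. P1 *\<^sub>v w) ` Y = carrier_vec e1"
    "{w \<in> Y. P1 *\<^sub>v w = 0\<^sub>v e1} = X" "\<forall>g\<in>carrier G. \<forall>w\<in>Y. P1 *\<^sub>v (\<rho> g *\<^sub>v w) = \<sigma>1 g *\<^sub>v (P1 *\<^sub>v w)"
    using f1 unfolding factor_iso_def by blast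
  obtain P2 where P2: "P2 \<in> carrier_mat e2 d" "(\<lambda>w. P2 *\<^sub>v w) ` Y = carrier_vec e2"
    "{w \<in> Y. P2 *\<^sub>v w = 0\<^sub>v e2} = X" "\<forall>g\<in>carrier G. \<forall>w\<in>Y. P2 *\<^sub>v (\<rho> g *\<^sub>v w) = \<sigma>2 g *\<^sub>v (P2 *\<^sub>v w)"
    using f2 unfolding factor_iso_def by blast
  obtain R where R: "R \<in> carrier_mat e2 e1" "\<forall>w\<in>Y. R *\<^sub>v (P1 *\<^sub>v w) = P2 *\<^sub>v w"
    using factor_through_projection[OF P1(1) P2(1) Ys P1(2) P1(3) P2(3)] by blast
  obtain R' where R': "R' \<in> carrier_mat e1 e2" "\<forall>w\<in>Y. R' *\<^sub>v (P2 *\<^sub>v w) = P1 *\<^sub>v w"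
    using factor_through_projection[OF P2(1) P1(1) Ys P2(2) P2(3) P1(3)] by blast
  have RR': "R * R' = 1\<^sub>m e2"
    by (rule mat_eq_on_image[where n = e2, OF _ _ P2(2)]) (use R R' P2(1) in \<open>simp_all add: assoc_mult_mat_vec\<close>)
  have R'R: "R' * R = 1\<^sub>m e1"
    by (rule mat_eq_on_image[where n = e1, OF _ _ P1(2)]) (use R R' P1(1) in \<open>simp_all add: assoc_mult_mat_vec\<close>)
  have e: "e1 = e2"
    using inj_mat_dim_le[OF R'(1) right_inverse_inj_mat[OF R(1) R'(1) RR']]
      inj_mat_dim_le[OF R(1) right_inverse_inj_mat[OF R'(1) R(1) R'R]] by simp
  have "R * \<sigma>1 g = \<sigma>2 g * R" if g: "g \<in> carrier G" for g
  proof (rule mat_eq_on_image[OF _ _ P1(2)])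
    have s1: "\<sigma>1 g \<in> carrier_mat e1 e1" and s2: "\<sigma>2 g \<in> carrier_mat e2 e2"
      using c1 c2 g by (auto simp: mat_valued_def)
    then show "R * \<sigma>1 g \<in> carrier_mat e2 e1" "\<sigma>2 g * R \<in> carrier_mat e2 e1" using R by auto
    fix w assume w: "w \<in> Y"
    have "(R * \<sigma>1 g) *\<^sub>v (P1 *\<^sub>v w) = R *\<^sub>v (P1 *\<^sub>v (\<rho> g *\<^sub>v w))"
      using R(1) s1 P1(1,4) g w by (simp add: assoc_mult_mat_vec)
    also have "\<dots> = \<sigma>2 g *\<^sub>v (P2 *\<^sub>v w)" using R(2) P2(4) Yinv g w by simp
    also have "\<dots> = (\<sigma>2 g * R) *\<^sub>v (P1 *\<^sub>v w)" using R s2 P1(1) w by (simp add: assoc_mult_mat_vec)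
    finally show "(R * \<sigma>1 g) *\<^sub>v (P1 *\<^sub>v w) = (\<sigma>2 g * R) *\<^sub>v (P1 *\<^sub>v w)" .
  qed
  moreover have "invertible_mat R"
    unfolding invertible_mat_def inverts_mat_def using R(1) R'(1) RR' R'R e by auto
  ultimately show ?thesis unfolding rep_iso_def using e R(1) by auto
qed

lemma factor_iso_rep_iso_trans:
  fixes \<rho> :: "'g \<Rightarrow> 'a::field mat"
  assumes fi: "factor_iso G d \<rho> X Y e \<sigma>" and iso: "rep_iso G e \<sigma> e' \<sigma>'"
    and c: "mat_valued G e \<sigma>" and c': "mat_valued G e' \<sigma>'" and r: "mat_valued G d \<rho>"
    and Yc: "Y \<subseteq> carrier_vec d"
  shows "factor_iso G d \<rho> X Y e' \<sigma>'"
proof -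
  obtain P where P: "P \<in> carrier_mat e d" "(\<lambda>w. P *\<^sub>v w) ` Y = carrier_vec e"
    "{w \<in> Y. P *\<^sub>v w = 0\<^sub>v e} = X" "\<forall>g\<in>carrier G. \<forall>w\<in>Y. P *\<^sub>v (\<rho> g *\<^sub>v w) = \<sigma> g *\<^sub>v (P *\<^sub>v w)"
    using fi unfolding factor_iso_def by blast
  obtain Q where e: "e = e'" and Q: "Q \<in> carrier_mat e e" "invertible_mat Q" "\<forall>g\<in>carrier G. Q * \<sigma> g = \<sigma>' g * Q"
    using iso unfolding rep_iso_def by blast
  obtain Q' where Q': "Q' \<in> carrier_mat e e" "Q * Q' = 1\<^sub>m e" "Q' * Q = 1\<^sub>m e"
    using invertible_mat_inverse[OF Q(1,2)] .
  have QP: "(Q * P) *\<^sub>v w = Q *\<^sub>v (P *\<^sub>v w)" if "w \<in> Y" for w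
    using that Yc Q(1) P(1) by (intro assoc_mult_mat_vec) auto
  have "(\<lambda>w. (Q * P) *\<^sub>v w) ` Y = carrier_vec e"
  proof (intro equalityI subsetI)
    fix x assume "x \<in> (\<lambda>w. (Q * P) *\<^sub>v w) ` Y" then show "x \<in> carrier_vec e" using mult_carrier_mat[OF Q(1) P(1)] by auto
  next
    fix x :: "'a vec" assume x: "x \<in> carrier_vec e"
    have "Q' *\<^sub>v x \<in> carrier_vec e" using Q'(1) by simp
    then obtain w where w: "w \<in> Y" "Q' *\<^sub>v x = P *\<^sub>v w" using P(2) by (metis imageE)
    have "(Q * P) *\<^sub>v w = Q *\<^sub>v (Q' *\<^sub>v x)" using QP[OF w(1)] w(2) by simp
    also have "\<dots> = x" using Q(1) Q'(1,2) x by (simp add: assoc_mult_mat_vec[symmetric, of _ e e])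
    finally show "x \<in> (\<lambda>w. (Q * P) *\<^sub>v w) ` Y" using w(1) by force
  qed
  moreover have "{w \<in> Y. (Q * P) *\<^sub>v w = 0\<^sub>v e} = X"
  proof -
    have "(Q * P) *\<^sub>v w = 0\<^sub>v e \<longleftrightarrow> P *\<^sub>v w = 0\<^sub>v e" if w: "w \<in> Y" for w
    proof
      assume "(Q * P) *\<^sub>v w = 0\<^sub>v e"
      then have "Q' *\<^sub>v (Q *\<^sub>v (P *\<^sub>v w)) = 0\<^sub>v e" using QP[OF w] Q'(1) by simp
      moreover have "Q' *\<^sub>v (Q *\<^sub>v (P *\<^sub>v w)) = P *\<^sub>v w"
        using Q(1) Q'(1,3) P(1) by (simp add: assoc_mult_mat_vec[symmetric, of _ e e])
      ultimately show "P *\<^sub>v w = 0\<^sub>v e" by simp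
    qed (use QP[OF w] Q(1) in simp)
    then show ?thesis using P(3) by blast
  qed
  moreover have "(Q * P) *\<^sub>v (\<rho> g *\<^sub>v w) = \<sigma>' g *\<^sub>v ((Q * P) *\<^sub>v w)" if g: "g \<in> carrier G" and w: "w \<in> Y" for g w
  proof -
    have s: "\<sigma> g \<in> carrier_mat e e" and s': "\<sigma>' g \<in> carrier_mat e e"
      using c c' g e by (auto simp: mat_valued_def)
    have "\<rho> g *\<^sub>v w \<in> carrier_vec d" using r g w Yc by (auto simp: mat_valued_def)
    then have "(Q * P) *\<^sub>v (\<rho> g *\<^sub>v w) = (Q * \<sigma> g) *\<^sub>v (P *\<^sub>v w)"
      using Q(1) P s g w by (simp add: assoc_mult_mat_vec)
    also have "\<dots> = \<sigma>' g *\<^sub>v ((Q * P) *\<^sub>v w)" using Q s' P(1) QP[OF w] g by (simp add: assoc_mult_mat_vec)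
    finally show ?thesis .
  qed
  ultimately show ?thesis unfolding factor_iso_def using e Q(1) P(1) by (intro bexI[of _ "Q * P"]) auto
qed

definition max_submodule :: "('g, 'm) monoid_scheme \<Rightarrow> nat \<Rightarrow> ('g \<Rightarrow> 'f::field mat) \<Rightarrow> 'f vec set \<Rightarrow> 'f vec set \<Rightarrow> bool" where
  "max_submodule G d \<rho> X Y \<longleftrightarrow> X \<subset> Y \<and>
     (\<forall>U. is_submodule G d \<rho> U \<and> X \<subseteq> U \<and> U \<subseteq> Y \<longrightarrow> U = X \<or> U = Y)"

lemma factor_iso_irreducible:
  fixes \<rho> :: "'g \<Rightarrow> 'a::field mat"
  assumes fi: "factor_iso G d \<rho> X Y e \<sigma>" and Y: "is_submodule G d \<rho> Y" and max: "max_submodule G d \<rho> X Y"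
  shows "e > 0" and "\<forall>Z. is_submodule G e \<sigma> Z \<longrightarrow> Z = {0\<^sub>v e} \<or> Z = carrier_vec e"
proof -
  have Ys: "is_subspace d Y" and Yinv: "\<forall>g\<in>carrier G. \<forall>w\<in>Y. \<rho> g *\<^sub>v w \<in> Y"
    using Y by (auto simp: is_submodule_def)
  obtain P where P: "P \<in> carrier_mat e d" "(\<lambda>w. P *\<^sub>v w) ` Y = carrier_vec e"
    "{w \<in> Y. P *\<^sub>v w = 0\<^sub>v e} = X" "\<forall>g\<in>carrier G. \<forall>w\<in>Y. P *\<^sub>v (\<rho> g *\<^sub>v w) = \<sigma> g *\<^sub>v (P *\<^sub>v w)"
    using fi unfolding factor_iso_def by blast
  show "e > 0"
  proof (rule ccontr)
    assume "\<not> e > 0"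
    then have "P *\<^sub>v w = 0\<^sub>v e" for w using P(1) by (intro eq_vecI) auto
    then have "Y \<subseteq> X" using P(3) by blast
    then show False using max by (auto simp: max_submodule_def)
  qed
  have PX: "(\<lambda>w. P *\<^sub>v w) ` X = {0\<^sub>v e}"
    using P(1,3) Ys by (auto simp: is_subspace_def intro!: image_eqI[where x = "0\<^sub>v d"])
  show "\<forall>Z. is_submodule G e \<sigma> Z \<longrightarrow> Z = {0\<^sub>v e} \<or> Z = carrier_vec e"
  proof (intro allI impI)
    fix Z assume Z: "is_submodule G e \<sigma> Z"
    then have Zs: "is_subspace e Z" by (rule submodule_subspace)
    \<comment> \<open>The preimage of Z is a submodule between X and Y, and its image is Z again.\<close>
    define U where "U = {w \<in> Y. P *\<^sub>v w \<in> Z}"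
    have "is_submodule G d \<rho> U" unfolding is_submodule_def
    proof (intro conjI ballI)
      show "is_subspace d U" unfolding U_def by (rule preimage_subspace[OF P(1) Ys Zs])
      fix g w assume "g \<in> carrier G" "w \<in> U"
      then show "\<rho> g *\<^sub>v w \<in> U" using P(4) Yinv Z by (auto simp: U_def is_submodule_def)
    qed
    moreover have "X \<subseteq> U" using P(3) Zs by (auto simp: U_def is_subspace_def)
    moreover have "U \<subseteq> Y" by (auto simp: U_def)
    ultimately have "U = X \<or> U = Y" using max unfolding max_submodule_def by blast
    moreover have "(\<lambda>w. P *\<^sub>v w) ` U = Z"
    proof (intro equalityI subsetI)
      fix z assume z: "z \<in> Z"
      then have "z \<in> carrier_vec e" using subspace_carrier[OF Zs] by blast
      then obtain w where "w \<in> Y" "z = P *\<^sub>v w" using P(2) by (metis imageE)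
      then show "z \<in> (\<lambda>w. P *\<^sub>v w) ` U" using z by (auto simp: U_def)
    qed (auto simp: U_def)
    ultimately show "Z = {0\<^sub>v e} \<or> Z = carrier_vec e" using PX P(2) by auto
  qed
qed

lemma factor_iso_is_rep:
  fixes \<rho> :: "'g \<Rightarrow> 'a::field mat"
  assumes G: "monoid G" and fi: "factor_iso G d \<rho> X Y e \<sigma>" and c: "mat_valued G e \<sigma>"
    and rep: "is_rep G d \<rho>" and Y: "is_submodule G d \<rho> Y"
  shows "is_rep G e \<sigma>"
proof -
  have Yinv: "\<forall>g\<in>carrier G. \<forall>w\<in>Y. \<rho> g *\<^sub>v w \<in> Y" and Yc: "Y \<subseteq> carrier_vec d"
    using Y submodule_carrier[OF Y] by (auto simp: is_submodule_def)
  obtain P where P: "P \<in> carrier_mat e d" "(\<lambda>w. P *\<^sub>v w) ` Y = carrier_vec e"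
    "\<forall>g\<in>carrier G. \<forall>w\<in>Y. P *\<^sub>v (\<rho> g *\<^sub>v w) = \<sigma> g *\<^sub>v (P *\<^sub>v w)"
    using fi unfolding factor_iso_def by blast
  have one: "\<one>\<^bsub>G\<^esub> \<in> carrier G" using G by (simp add: monoid.one_closed)
  have "\<sigma> \<one>\<^bsub>G\<^esub> = 1\<^sub>m e"
  proof (rule mat_eq_on_image[OF _ _ P(2)])
    fix w assume w: "w \<in> Y"
    then have "\<sigma> \<one>\<^bsub>G\<^esub> *\<^sub>v (P *\<^sub>v w) = P *\<^sub>v (\<rho> \<one>\<^bsub>G\<^esub> *\<^sub>v w)" using P(3) one by simp
    also have "\<dots> = P *\<^sub>v w" using rep w Yc by (auto simp: is_rep_def)
    finally show "\<sigma> \<one>\<^bsub>G\<^esub> *\<^sub>v (P *\<^sub>v w) = 1\<^sub>m e *\<^sub>v (P *\<^sub>v w)" using P(1) by simp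
  qed (use c one in \<open>auto simp: mat_valued_def\<close>)
  moreover have "\<sigma> (g \<otimes>\<^bsub>G\<^esub> h) = \<sigma> g * \<sigma> h" if g: "g \<in> carrier G" and h: "h \<in> carrier G" for g h
  proof (rule mat_eq_on_image[OF _ _ P(2)])
    have gh: "g \<otimes>\<^bsub>G\<^esub> h \<in> carrier G" using G g h by (simp add: monoid.m_closed)
    have sg: "\<sigma> g \<in> carrier_mat e e" and sh: "\<sigma> h \<in> carrier_mat e e" using c g h by (auto simp: mat_valued_def)
    show "\<sigma> (g \<otimes>\<^bsub>G\<^esub> h) \<in> carrier_mat e e" using c gh by (simp add: mat_valued_def)
    show "\<sigma> g * \<sigma> h \<in> carrier_mat e e" using sg sh by simp
    fix w assume w: "w \<in> Y"
    have rg: "\<rho> g \<in> carrier_mat d d" and rh: "\<rho> h \<in> carrier_mat d d" using rep g h by (auto simp: is_rep_def)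
    have "w \<in> carrier_vec d" using w Yc by auto
    then have "\<rho> (g \<otimes>\<^bsub>G\<^esub> h) *\<^sub>v w = \<rho> g *\<^sub>v (\<rho> h *\<^sub>v w)"
      using rep g h assoc_mult_mat_vec[OF rg rh] by (simp add: is_rep_def)
    then have "\<sigma> (g \<otimes>\<^bsub>G\<^esub> h) *\<^sub>v (P *\<^sub>v w) = P *\<^sub>v (\<rho> g *\<^sub>v (\<rho> h *\<^sub>v w))"
      using P(3) gh w by metis
    also have "\<dots> = \<sigma> g *\<^sub>v (\<sigma> h *\<^sub>v (P *\<^sub>v w))" using P(3) g h w Yinv by simp
    also have "\<dots> = (\<sigma> g * \<sigma> h) *\<^sub>v (P *\<^sub>v w)" using sg sh P(1) by (simp add: assoc_mult_mat_vec)
    finally show "\<sigma> (g \<otimes>\<^bsub>G\<^esub> h) *\<^sub>v (P *\<^sub>v w) = (\<sigma> g * \<sigma> h) *\<^sub>v (P *\<^sub>v w)" .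
  qed
  ultimately show ?thesis using c unfolding is_rep_def mat_valued_def by blast
qed

lemma factor_iso_simple:
  assumes "monoid G" "factor_iso G d \<rho> X Y e \<sigma>" "mat_valued G e \<sigma>" "is_rep G d \<rho>"
    "is_submodule G d \<rho> Y" "max_submodule G d \<rho> X Y"
  shows "is_simple G e \<sigma>"
  using factor_iso_is_rep[OF assms(1-5)] factor_iso_irreducible[OF assms(2,5,6)] by (simp add: is_simple_def)

lemma factor_iso_exists:
  fixes \<rho> :: "'g \<Rightarrow> 'a::field mat"
  assumes r: "mat_valued G d \<rho>" and X: "is_submodule G d \<rho> X" and Y: "is_submodule G d \<rho> Y" and XY: "X \<subseteq> Y"
  shows "\<exists>e \<sigma>. factor_iso G d \<rho> X Y e \<sigma> \<and> mat_valued G e \<sigma>"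
proof -
  define Xs where "Xs i = (if i = 0 then X else if i = 1 then Y else carrier_vec d)" for i :: nat
  have sub: "\<forall>i\<le>2. is_subspace d (Xs i)"
    using X Y carrier_is_subspace by (auto simp: Xs_def is_submodule_def)
  have mono: "\<forall>i<2. Xs i \<subseteq> Xs (Suc i)" using XY submodule_carrier[OF Y] by (auto simp: Xs_def less_2_cases_iff)
  have top: "Xs 2 = carrier_vec d" by (simp add: Xs_def)
  obtain T Ti a where Ta: "T \<in> carrier_mat d d" "Ti \<in> carrier_mat d d" "T * Ti = 1\<^sub>m d" "Ti * T = 1\<^sub>m d"
    "\<forall>i\<le>2. a i \<le> d \<and> Xs i = coord_prefix d Ti (a i)" "\<forall>i<2. a i \<le> a (Suc i)" "a 2 = d"
    using adapted_basis[OF sub mono top] .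
  interpret adapted_basis d T Ti using Ta by unfold_locales
  have "Xs 0 = coord_prefix d Ti (a 0)" "Xs 1 = coord_prefix d Ti (a 1)" "a 1 \<le> d" "a 0 \<le> a 1"
    using Ta(5)[rule_format, of 0] Ta(5)[rule_format, of 1] Ta(6) by auto
  then have XY': "X = coord_prefix d Ti (a 0)" "Y = coord_prefix d Ti (a 1)" and ab: "a 0 \<le> a 1" "a 1 \<le> d"
    by (simp_all add: Xs_def)
  have "factor_iso G d \<rho> X Y (a 1 - a 0) (\<lambda>g. diag_block (Ti * \<rho> g * T) (a 0) (a 1))"
    unfolding XY' using X XY'(1) by (intro factor_iso_diag_block[OF r ab]) (simp add: is_submodule_def)
  moreover have "mat_valued G (a 1 - a 0) (\<lambda>g. diag_block (Ti * \<rho> g * T) (a 0) (a 1))"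
    by (simp add: mat_valued_def)
  ultimately show ?thesis by blast
qed

section \<open>Composition series and the Jordan--Hoelder theorem\<close>

definition comp_series_between :: "('g, 'm) monoid_scheme \<Rightarrow> nat \<Rightarrow> ('g \<Rightarrow> 'f::field mat)
    \<Rightarrow> 'f vec set \<Rightarrow> 'f vec set \<Rightarrow> nat \<Rightarrow> (nat \<Rightarrow> 'f vec set) \<Rightarrow> bool" where
  "comp_series_between G d \<rho> X Y k Ws \<longleftrightarrow> Ws 0 = X \<and> Ws k = Y \<and> (\<forall>i\<le>k. is_submodule G d \<rho> (Ws i)) \<and>
     (\<forall>i<k. max_submodule G d \<rho> (Ws i) (Ws (Suc i)))"

lemma is_comp_series_between:
  "is_comp_series G d \<rho> k Ws \<longleftrightarrow> comp_series_between G d \<rho> {0\<^sub>v d} (carrier_vec d) k Ws"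
  unfolding is_comp_series_def comp_series_between_def max_submodule_def by simp

lemma comp_series_mono:
  assumes "comp_series_between G d \<rho> X Y k Ws" "i \<le> j" "j \<le> k"
  shows "Ws i \<subseteq> Ws j"
  using assms(2,3)
proof (induction j)
  case (Suc j)
  then have "j < k" by simp
  then have "Ws j \<subseteq> Ws (Suc j)" using assms(1) unfolding comp_series_between_def max_submodule_def by blast
  with Suc show ?case by (cases "i = Suc j") auto
qed simp

lemma comp_series_prefix:
  "comp_series_between G d \<rho> X Y k Ws \<Longrightarrow> m \<le> k \<Longrightarrow> comp_series_between G d \<rho> X (Ws m) m Ws"
  unfolding comp_series_between_def by auto

lemma comp_series_snoc:
  assumes "comp_series_between G d \<rho> X Z k Ws" "is_submodule G d \<rho> Y" "max_submodule G d \<rho> Z Y"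
  shows "comp_series_between G d \<rho> X Y (Suc k) (Ws(Suc k := Y))"
  using assms unfolding comp_series_between_def by (auto simp: le_Suc_eq less_Suc_eq)

lemma comp_series_length_0_iff:
  assumes s: "comp_series_between G d \<rho> X Y k Ws"
  shows "k = 0 \<longleftrightarrow> X = Y"
proof
  assume "X = Y"
  show "k = 0"
  proof (rule ccontr)
    assume "k \<noteq> 0"
    then have "Ws 0 \<subset> Ws 1" "Ws 1 \<subseteq> Ws k"
      using s comp_series_mono[OF s, of 1 k] by (auto simp: comp_series_between_def max_submodule_def)
    then show False using s \<open>X = Y\<close> by (auto simp: comp_series_between_def)
  qed
qed (use s in \<open>auto simp: comp_series_between_def\<close>)

text \<open>Induction on the dimension of Y: among the proper submodules of Y containing X, one of
  largest dimension is maximal in Y.\<close>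
lemma comp_series_exists:
  fixes \<rho> :: "'g \<Rightarrow> 'a::field mat"
  assumes X: "is_submodule G d \<rho> X" and Y: "is_submodule G d \<rho> Y" and XY: "X \<subseteq> Y"
  shows "\<exists>k Ws. comp_series_between G d \<rho> X Y k Ws"
  using Y XY
proof (induction "subspace_dim d Y" arbitrary: Y rule: less_induct)
  case less
  show ?case
  proof (cases "X = Y")
    case True
    then show ?thesis using X by (intro exI[of _ 0] exI[of _ "\<lambda>_. X"]) (auto simp: comp_series_between_def)
  next
    case False
    define S where "S = {Z. is_submodule G d \<rho> Z \<and> X \<subseteq> Z \<and> Z \<subset> Y}"
    have "X \<in> S" using X False less.prems by (auto simp: S_def)
    moreover have "\<forall>Z. Z \<in> S \<longrightarrow> subspace_dim d Z < Suc d" using subspace_dim_le by (metis less_Suc_eq_le)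
    ultimately obtain Z where Z: "Z \<in> S" "\<forall>Z'. Z' \<in> S \<longrightarrow> subspace_dim d Z' \<le> subspace_dim d Z"
      using ex_has_greatest_nat[of "\<lambda>Z. Z \<in> S"] by blast
    then have Zm: "is_submodule G d \<rho> Z" and XZ: "X \<subseteq> Z" and ZY: "Z \<subset> Y" by (auto simp: S_def)
    have "max_submodule G d \<rho> Z Y"
      unfolding max_submodule_def
    proof (intro conjI ZY allI impI)
      fix U assume U: "is_submodule G d \<rho> U \<and> Z \<subseteq> U \<and> U \<subseteq> Y"
      show "U = Z \<or> U = Y"
      proof (rule ccontr)
        assume ne: "\<not> (U = Z \<or> U = Y)"
        then have "subspace_dim d U \<le> subspace_dim d Z" using Z(2) U XZ by (auto simp: S_def)
        moreover have "subspace_dim d Z < subspace_dim d U"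
          using subspace_dim_strict_mono[of d Z U] U Zm ne by (auto simp: is_submodule_def)
        ultimately show False by simp
      qed
    qed
    moreover have "subspace_dim d Z < subspace_dim d Y"
      using subspace_dim_strict_mono[of d Z Y] Zm less.prems ZY by (auto simp: is_submodule_def)
    then obtain k Ws where "comp_series_between G d \<rho> X Z k Ws" using less.hyps Zm XZ by blast
    ultimately show ?thesis using comp_series_snoc less.prems(1) by blast
  qed
qed

definition factor_count :: "('g, 'm) monoid_scheme \<Rightarrow> nat \<Rightarrow> ('g \<Rightarrow> 'f::field mat) \<Rightarrow> nat
    \<Rightarrow> (nat \<Rightarrow> 'f vec set) \<Rightarrow> nat \<Rightarrow> ('g \<Rightarrow> 'f mat) \<Rightarrow> nat" where
  "factor_count G d \<rho> k Ws e \<sigma> = card {i. i < k \<and> factor_iso G d \<rho> (Ws i) (Ws (Suc i)) e \<sigma>}"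

lemma factor_count_0[simp]: "factor_count G d \<rho> 0 Ws e \<sigma> = 0"
  by (simp add: factor_count_def)

lemma factor_count_Suc:
  "factor_count G d \<rho> (Suc k) Ws e \<sigma>
     = factor_count G d \<rho> k Ws e \<sigma> + (if factor_iso G d \<rho> (Ws k) (Ws (Suc k)) e \<sigma> then 1 else 0)"
proof -
  let ?P = "\<lambda>i. factor_iso G d \<rho> (Ws i) (Ws (Suc i)) e \<sigma>"
  have "{i. i < Suc k \<and> ?P i} = {i. i < k \<and> ?P i} \<union> (if ?P k then {k} else {})"
    by (auto simp: less_Suc_eq)
  then show ?thesis unfolding factor_count_def by (auto simp: card_insert_if)
qed

lemma factor_count_snoc:
  "factor_count G d \<rho> (Suc k) (Ws(Suc k := Y)) e \<sigma>
     = factor_count G d \<rho> k Ws e \<sigma> + (if factor_iso G d \<rho> (Ws k) Y e \<sigma> then 1 else 0)"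
proof -
  have "factor_count G d \<rho> k (Ws(Suc k := Y)) e \<sigma> = factor_count G d \<rho> k Ws e \<sigma>"
    unfolding factor_count_def by (intro arg_cong[where f = card]) auto
  then show ?thesis by (simp add: factor_count_Suc)
qed

locale two_max_submodules =
  fixes G :: "('g, 'm) monoid_scheme" and d :: nat and \<rho> :: "'g \<Rightarrow> 'a::field mat" and U W Y :: "'a vec set"
  assumes r: "mat_valued G d \<rho>"
    and U: "is_submodule G d \<rho> U" and W: "is_submodule G d \<rho> W" and Y: "is_submodule G d \<rho> Y"
    and maxU: "max_submodule G d \<rho> U Y" and maxW: "max_submodule G d \<rho> W Y" and UW: "U \<noteq> W"
begin

lemma UY: "U \<subseteq> Y" and WY: "W \<subseteq> Y"
  using maxU maxW by (auto simp: max_submodule_def)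

lemma sym: "two_max_submodules G d \<rho> W U Y"
  using r U W Y maxU maxW UW by unfold_locales auto

lemma subspace_sum_eq: "subspace_sum U W = Y"
proof -
  have Uc: "U \<subseteq> carrier_vec d" and Ws: "is_subspace d W"
    using submodule_carrier[OF U] submodule_subspace[OF W] .
  have "U \<subseteq> subspace_sum U W" by (rule subspace_sum_left[OF Ws Uc])
  moreover have "subspace_sum U W \<subseteq> Y" using subspace_sum_least[OF submodule_subspace[OF Y] UY WY] .
  ultimately have "subspace_sum U W = U \<or> subspace_sum U W = Y"
    using maxU submodule_sum[OF r U W] by (auto simp: max_submodule_def)
  moreover have "subspace_sum U W \<noteq> U"
  proof
    assume "subspace_sum U W = U"
    then have "W \<subseteq> U" using subspace_sum_right[OF submodule_subspace[OF U] submodule_carrier[OF W]] by blast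
    then show False using maxW maxU U UW unfolding max_submodule_def by blast
  qed
  ultimately show ?thesis by blast
qed

lemma max_submodule_Int: "max_submodule G d \<rho> (U \<inter> W) U"
  unfolding max_submodule_def
proof (intro conjI allI impI)
  show "U \<inter> W \<subset> U" using maxU maxW W UW unfolding max_submodule_def by blast
next
  fix Z assume Z: "is_submodule G d \<rho> Z \<and> U \<inter> W \<subseteq> Z \<and> Z \<subseteq> U"
  have Zs: "is_subspace d Z" and Zc: "Z \<subseteq> carrier_vec d"
    using submodule_subspace[of G d \<rho> Z] submodule_carrier[of G d \<rho> Z] Z by auto
  have "W \<subseteq> subspace_sum Z W"
    using subspace_sum_right[OF Zs submodule_carrier[OF W]] .
  moreover have "subspace_sum Z W \<subseteq> Y" using subspace_sum_least[OF submodule_subspace[OF Y] _ WY] Z UY by blast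
  ultimately have "subspace_sum Z W = W \<or> subspace_sum Z W = Y"
    using maxW submodule_sum[OF r _ W] Z by (auto simp: max_submodule_def)
  then show "Z = U \<inter> W \<or> Z = U"
  proof
    assume "subspace_sum Z W = W"
    then have "Z \<subseteq> W" using subspace_sum_left[OF submodule_subspace[OF W] Zc] by blast
    then show ?thesis using Z by blast
  next
    assume ZWY: "subspace_sum Z W = Y"
    have "U \<subseteq> Z"
    proof
      fix u assume u: "u \<in> U"
      then have "u \<in> subspace_sum Z W" using ZWY UY by blast
      then obtain z w where zw: "u = z + w" "z \<in> Z" "w \<in> W" unfolding subspace_sum_def by blast
      have "z \<in> carrier_vec d" "w \<in> carrier_vec d" using zw Zc submodule_carrier[OF W] by auto
      then have "w = u - z" using zw(1) by (intro eq_vecI) auto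
      moreover have "u - z \<in> U" using subspace_diff[OF submodule_subspace[OF U] u] zw(2) Z by blast
      ultimately have "w \<in> Z" using zw(3) Z by blast
      then show "u \<in> Z" using zw Zs by (auto simp: is_subspace_def)
    qed
    then show ?thesis using Z by blast
  qed
qed

text \<open>Second isomorphism theorem: U/(U \<inter> W) is isomorphic to (U + W)/W = Y/W.\<close>
lemma factor_iso_Int_iff:
  assumes c: "mat_valued G e \<sigma>"
  shows "factor_iso G d \<rho> (U \<inter> W) U e \<sigma> \<longleftrightarrow> factor_iso G d \<rho> W Y e \<sigma>"
proof -
  have span: "\<forall>y\<in>Y. \<exists>u\<in>U. \<exists>w\<in>W. y = u + w" using subspace_sum_eq unfolding subspace_sum_def by blast
  note restrict = factor_iso_restrict[OF _ UY submodule_carrier[OF Y] span]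
  obtain e0 \<sigma>0 where f0: "factor_iso G d \<rho> W Y e0 \<sigma>0" "mat_valued G e0 \<sigma>0"
    using factor_iso_exists[OF r W Y] maxW by (auto simp: max_submodule_def)
  show ?thesis
  proof
    assume "factor_iso G d \<rho> (U \<inter> W) U e \<sigma>"
    then have "rep_iso G e0 \<sigma>0 e \<sigma>" using factor_iso_unique[OF restrict[OF f0(1)] _ f0(2) c U] by blast
    then show "factor_iso G d \<rho> W Y e \<sigma>"
      using factor_iso_rep_iso_trans[OF f0(1) _ f0(2) c r submodule_carrier[OF Y]] by blast
  qed (rule restrict)
qed

lemma factor_count_Int_series:
  assumes c: "mat_valued G e \<sigma>" and Cs: "Cs j = U \<inter> W"
  shows "factor_count G d \<rho> (Suc j) (Cs(Suc j := U)) e \<sigma> + (if factor_iso G d \<rho> U Y e \<sigma> then 1 else 0)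
    = factor_count G d \<rho> (Suc j) (Cs(Suc j := W)) e \<sigma> + (if factor_iso G d \<rho> W Y e \<sigma> then 1 else 0)"
proof -
  interpret WU: two_max_submodules G d \<rho> W U Y by (rule sym)
  have "factor_iso G d \<rho> (U \<inter> W) W e \<sigma> \<longleftrightarrow> factor_iso G d \<rho> U Y e \<sigma>"
    using WU.factor_iso_Int_iff[OF c] by (simp add: Int_commute)
  then show ?thesis using factor_iso_Int_iff[OF c] Cs by (simp add: factor_count_snoc)
qed

end

lemma two_max_submodules_Int_series:
  assumes "two_max_submodules G d \<rho> U W Y" and X: "is_submodule G d \<rho> X" "X \<subseteq> U" "X \<subseteq> W"
  obtains j Cs where "Cs j = U \<inter> W"
    "comp_series_between G d \<rho> X U (Suc j) (Cs(Suc j := U))"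
    "comp_series_between G d \<rho> X W (Suc j) (Cs(Suc j := W))"
proof -
  interpret two_max_submodules G d \<rho> U W Y by fact
  interpret WU: two_max_submodules G d \<rho> W U Y by (rule sym)
  obtain j Cs where Cs: "comp_series_between G d \<rho> X (U \<inter> W) j Cs"
    using comp_series_exists[OF X(1) submodule_Int[OF U W]] X by blast
  moreover have "max_submodule G d \<rho> (U \<inter> W) W" using WU.max_submodule_Int by (simp add: Int_commute)
  moreover have "Cs j = U \<inter> W" using Cs by (simp add: comp_series_between_def)
  ultimately show ?thesis
    using that comp_series_snoc[OF Cs U max_submodule_Int] comp_series_snoc[OF Cs W] by blast
qed

text \<open>Induction on the length; when the last steps differ, both series are compared with one through
  the intersection of the two penultimate terms.\<close>
theorem jordan_hoelder:
  fixes \<rho> :: "'g \<Rightarrow> 'a::field mat"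
  assumes r: "mat_valued G d \<rho>"
  shows "comp_series_between G d \<rho> X Y k Ws \<Longrightarrow> comp_series_between G d \<rho> X Y k' Ws' \<Longrightarrow>
    k = k' \<and> (\<forall>e \<sigma>. mat_valued G e \<sigma> \<longrightarrow> factor_count G d \<rho> k Ws e \<sigma> = factor_count G d \<rho> k' Ws' e \<sigma>)"
proof (induction k arbitrary: Y Ws k' Ws' rule: less_induct)
  case (less k)
  note s1 = less.prems(1) and s2 = less.prems(2)
  show ?case
  proof (cases "k = 0")
    case True
    then show ?thesis using comp_series_length_0_iff[OF s1] comp_series_length_0_iff[OF s2] by simp
  next
    case False
    then obtain m m' where m: "k = Suc m" "k' = Suc m'"
      using comp_series_length_0_iff[OF s1] comp_series_length_0_iff[OF s2] not0_implies_Suc by metis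
    define U W where "U = Ws m" and "W = Ws' m'"
    have sU: "comp_series_between G d \<rho> X U m Ws" and sW: "comp_series_between G d \<rho> X W m' Ws'"
      unfolding U_def W_def using comp_series_prefix[OF s1, of m] comp_series_prefix[OF s2, of m'] m by auto
    have last: "Ws k = Y" "Ws' k' = Y" "is_submodule G d \<rho> U" "is_submodule G d \<rho> W" "is_submodule G d \<rho> Y"
      "max_submodule G d \<rho> U Y" "max_submodule G d \<rho> W Y"
      using s1 s2 m unfolding comp_series_between_def U_def W_def by auto
    have cU: "factor_count G d \<rho> k Ws e \<sigma> = factor_count G d \<rho> m Ws e \<sigma> + (if factor_iso G d \<rho> U Y e \<sigma> then 1 else 0)"
      and cW: "factor_count G d \<rho> k' Ws' e \<sigma> = factor_count G d \<rho> m' Ws' e \<sigma> + (if factor_iso G d \<rho> W Y e \<sigma> then 1 else 0)"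
      for e \<sigma> using factor_count_Suc[of G d \<rho> m Ws e \<sigma>] factor_count_Suc[of G d \<rho> m' Ws' e \<sigma>] last(1,2) m
      by (simp_all add: U_def W_def)
    show ?thesis
    proof (cases "U = W")
      case True
      then show ?thesis using less.IH[OF _ sU, of m' Ws'] sW cU cW m by auto
    next
      case False
      interpret two_max_submodules G d \<rho> U W Y
        using two_max_submodules.intro[OF r last(3-7) False] .
      have "Ws 0 = X" "Ws' 0 = X" "Ws m = U" "Ws' m' = W" "is_submodule G d \<rho> X"
        using sU sW by (auto simp: comp_series_between_def)
      then have X: "is_submodule G d \<rho> X" "X \<subseteq> U" "X \<subseteq> W"
        using comp_series_mono[OF sU, of 0 m] comp_series_mono[OF sW, of 0 m'] by auto
      obtain j Cs where Cs: "Cs j = U \<inter> W"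
        "comp_series_between G d \<rho> X U (Suc j) (Cs(Suc j := U))"
        "comp_series_between G d \<rho> X W (Suc j) (Cs(Suc j := W))"
        using two_max_submodules_Int_series[OF two_max_submodules_axioms X] .
      have "m < k" using m by simp
      note IH1 = less.IH[OF this sU Cs(2)]
      have "Suc j < k" using m IH1 by simp
      note IH2 = less.IH[OF this Cs(3) sW]
      have "factor_count G d \<rho> k Ws e \<sigma> = factor_count G d \<rho> k' Ws' e \<sigma>" if c: "mat_valued G e \<sigma>" for e \<sigma>
      proof -
        have "factor_count G d \<rho> m Ws e \<sigma> = factor_count G d \<rho> (Suc j) (Cs(Suc j := U)) e \<sigma>"
          and "factor_count G d \<rho> (Suc j) (Cs(Suc j := W)) e \<sigma> = factor_count G d \<rho> m' Ws' e \<sigma>"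
          using IH1 IH2 c by blast+
        then show ?thesis using cU cW factor_count_Int_series[where Cs = Cs and j = j, OF c Cs(1)] by simp
      qed
      then show ?thesis using IH1 IH2 m by simp
    qed
  qed
qed

lemma comp_mult_eq_factor_count:
  fixes \<rho> :: "'g \<Rightarrow> 'f::field mat"
  assumes r: "mat_valued G d \<rho>" and s: "is_comp_series G d \<rho> k Ws" and c: "mat_valued G e \<sigma>"
  shows "comp_mult G d \<rho> e \<sigma> = factor_count G d \<rho> k Ws e \<sigma>"
proof -
  have "\<exists>c k Ws. is_comp_series G d \<rho> k Ws \<and> c = factor_count G d \<rho> k Ws e \<sigma>"
    using s by blast
  from someI_ex[OF this] obtain k' Ws' where s': "is_comp_series G d \<rho> k' Ws'"
    and "comp_mult G d \<rho> e \<sigma> = factor_count G d \<rho> k' Ws' e \<sigma>"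
    unfolding comp_mult_def factor_count_def by blast
  moreover have "factor_count G d \<rho> k' Ws' e \<sigma> = factor_count G d \<rho> k Ws e \<sigma>"
    using jordan_hoelder[OF r, of _ _ k' Ws' k Ws] s s' c unfolding is_comp_series_between by blast
  ultimately show ?thesis by simp
qed

section \<open>Characteristic polynomials along a composition series\<close>

lemma comp_series_block_triangular:
  fixes \<rho> :: "'g \<Rightarrow> 'f::field mat"
  assumes r: "mat_valued G d \<rho>" and s: "comp_series_between G d \<rho> {0\<^sub>v d} (carrier_vec d) k Ws"
  obtains T Ti a where "adapted_basis d T Ti" "a 0 = 0" "\<forall>t<k. a t \<le> a (Suc t)" "a k = d"
    "\<forall>t<k. factor_iso G d \<rho> (Ws t) (Ws (Suc t)) (a (Suc t) - a t) (\<lambda>h. diag_block (Ti * \<rho> h * T) (a t) (a (Suc t)))"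
    "\<forall>h\<in>carrier G. \<forall>t\<le>k. \<forall>i j. a t \<le> i \<longrightarrow> i < d \<longrightarrow> j < a t \<longrightarrow> (Ti * \<rho> h * T) $$ (i,j) = 0"
proof -
  have "\<forall>i\<le>k. is_subspace d (Ws i)" "\<forall>i<k. Ws i \<subseteq> Ws (Suc i)" "Ws k = carrier_vec d"
    using s by (auto simp: comp_series_between_def max_submodule_def is_submodule_def)
  then obtain T Ti a where Ta: "T \<in> carrier_mat d d" "Ti \<in> carrier_mat d d" "T * Ti = 1\<^sub>m d" "Ti * T = 1\<^sub>m d"
    "\<forall>i\<le>k. a i \<le> d \<and> Ws i = coord_prefix d Ti (a i)" "\<forall>i<k. a i \<le> a (Suc i)" "a k = d"
    by (rule adapted_basis)
  interpret adapted_basis d T Ti using Ta by unfold_locales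
  have inv: "\<forall>h\<in>carrier G. \<forall>x\<in>coord_prefix d Ti (a t). \<rho> h *\<^sub>v x \<in> coord_prefix d Ti (a t)" if "t \<le> k" for t
    using s that Ta(5) unfolding comp_series_between_def is_submodule_def by metis
  have "a 0 = 0"
    using s Ta(5) coord_prefix_eq_zero_imp_0[of "a 0"] by (auto simp: comp_series_between_def)
  moreover have "factor_iso G d \<rho> (Ws t) (Ws (Suc t)) (a (Suc t) - a t) (\<lambda>h. diag_block (Ti * \<rho> h * T) (a t) (a (Suc t)))"
    if "t < k" for t
    using factor_iso_diag_block[OF r _ _ inv[of t]] Ta(5,6) that by simp
  moreover have "(Ti * \<rho> h * T) $$ (i,j) = 0"
    if "h \<in> carrier G" "t \<le> k" "a t \<le> i" "i < d" "j < a t" for h t i j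
    using conj_diag_block_zero[of "\<rho> h" "a t" j i] inv[of t] r that by (auto simp: mat_valued_def)
  ultimately show ?thesis using that adapted_basis_axioms Ta(6,7) by blast
qed

lemma char_poly_comp_series:
  fixes \<rho> :: "'g \<Rightarrow> 'f::field mat"
  assumes r: "mat_valued G d \<rho>" and h: "h \<in> carrier G" and T: "adapted_basis d T Ti"
    and a: "a 0 = 0" "\<forall>t<k. a t \<le> a (Suc t)" "a k = d"
    and z: "\<forall>h\<in>carrier G. \<forall>t\<le>k. \<forall>i j. a t \<le> i \<longrightarrow> i < d \<longrightarrow> j < a t \<longrightarrow> (Ti * \<rho> h * T) $$ (i,j) = 0"
  shows "char_poly (\<rho> h) = (\<Prod>t<k. char_poly (diag_block (Ti * \<rho> h * T) (a t) (a (Suc t))))"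
proof -
  interpret adapted_basis d T Ti by fact
  have \<rho>h: "\<rho> h \<in> carrier_mat d d" using r h by (simp add: mat_valued_def)
  have "similar_mat (Ti * \<rho> h * T) (\<rho> h)"
    unfolding similar_mat_def similar_mat_wit_def using T Ti TTi TiT \<rho>h
    by (intro exI[of _ Ti] exI[of _ T]) (auto simp: assoc_mult_mat[of _ d d _ d _ d])
  then have "char_poly (\<rho> h) = char_poly (diag_block (Ti * \<rho> h * T) 0 (a k))"
    using a(3) diag_block_full[of "Ti * \<rho> h * T" d] T Ti \<rho>h by (simp add: char_poly_similar)
  also have "\<dots> = (\<Prod>t<k. char_poly (diag_block (Ti * \<rho> h * T) (a t) (a (Suc t))))"
  proof (rule char_poly_diag_blocks[OF _ a(1,2)])
    show "Ti * \<rho> h * T \<in> carrier_mat d d" using T Ti \<rho>h by simp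
    show "\<And>t i j. t \<le> k \<Longrightarrow> a t \<le> i \<Longrightarrow> i < d \<Longrightarrow> j < a t \<Longrightarrow> (Ti * \<rho> h * T) $$ (i, j) = 0"
      using z h by blast
  qed (use a(3) in simp)
  finally show ?thesis .
qed

section \<open>Triangularization over an algebraically closed field\<close>

text \<open>A single matrix is a representation of the trivial monoid; its simple modules are
  one-dimensional because the matrix has an eigenvector.\<close>
definition unit_monoid :: "unit monoid" where
  "unit_monoid = \<lparr>carrier = UNIV, monoid.mult = (\<lambda>_ _. ()), one = ()\<rparr>"

lemma eigenvector_line_submodule:
  fixes B :: "'f::field mat"
  assumes B: "B \<in> carrier_mat e e" and x: "x \<in> carrier_vec e" "B *\<^sub>v x = lam \<cdot>\<^sub>v x"
  shows "is_submodule G e (\<lambda>_. B) {c \<cdot>\<^sub>v x | c. True}"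
  unfolding is_submodule_def is_subspace_def
proof (intro conjI ballI allI)
  show "{c \<cdot>\<^sub>v x |c. True} \<subseteq> carrier_vec e" using x by auto
  have "0\<^sub>v e = 0 \<cdot>\<^sub>v x" using x by auto
  then show "0\<^sub>v e \<in> {c \<cdot>\<^sub>v x |c. True}" by blast
next
  fix v w assume "v \<in> {c \<cdot>\<^sub>v x |c. True}" "w \<in> {c \<cdot>\<^sub>v x |c. True}"
  then obtain c1 c2 where "v = c1 \<cdot>\<^sub>v x" "w = c2 \<cdot>\<^sub>v x" by blast
  then have "v + w = (c1 + c2) \<cdot>\<^sub>v x" using x by (simp add: add_smult_distrib_vec)
  then show "v + w \<in> {c \<cdot>\<^sub>v x |c. True}" by blast
next
  fix a and v :: "'f vec" assume "v \<in> {c \<cdot>\<^sub>v x |c. True}"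
  then obtain c where c: "v = c \<cdot>\<^sub>v x" by blast
  then have "a \<cdot>\<^sub>v v = (a * c) \<cdot>\<^sub>v x" by (simp add: smult_smult_assoc)
  then show "a \<cdot>\<^sub>v v \<in> {c \<cdot>\<^sub>v x |c. True}" by blast
  have "B *\<^sub>v v = (c * lam) \<cdot>\<^sub>v x" unfolding c using B x by (simp add: mult_mat_vec smult_smult_assoc)
  then show "B *\<^sub>v v \<in> {c \<cdot>\<^sub>v x |c. True}" by blast
qed

lemma line_eq_carrier_vec_imp_le_1:
  fixes x :: "'a::field vec"
  assumes Z: "{c \<cdot>\<^sub>v x | c. True} = carrier_vec e" and x: "x \<in> carrier_vec e"
  shows "e \<le> 1"
proof (rule ccontr)
  assume "\<not> e \<le> 1"
  then have e2: "1 < e" by simp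
  have "unit_vec e 0 \<in> {c \<cdot>\<^sub>v x | c. True}" "unit_vec e 1 \<in> {c \<cdot>\<^sub>v x | c. True}"
    unfolding Z by auto
  then obtain c0 c1 where c0: "unit_vec e 0 = c0 \<cdot>\<^sub>v x" and c1: "unit_vec e 1 = c1 \<cdot>\<^sub>v x" by blast
  have "1 = c0 * x $ 0" using arg_cong[OF c0, of "\<lambda>v. v $ 0"] e2 x by simp
  moreover have "0 = c0 * x $ 1" using arg_cong[OF c0, of "\<lambda>v. v $ 1"] e2 x by simp
  ultimately have "x $ 1 = 0" by (metis mult_zero_left no_zero_divisors zero_neq_one)
  moreover have "1 = c1 * x $ 1" using arg_cong[OF c1, of "\<lambda>v. v $ 1"] e2 x by simp
  ultimately show False by simp
qed

lemma irreducible_operator_dim_1: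
  fixes B :: "'f::alg_closed_field mat"
  assumes B: "B \<in> carrier_mat e e" and e: "e > 0"
    and irr: "\<forall>Z. is_submodule G e (\<lambda>_. B) Z \<longrightarrow> Z = {0\<^sub>v e} \<or> Z = carrier_vec e"
  shows "e = 1"
proof -
  have "degree (char_poly B) = e" using degree_monic_char_poly[OF B] by simp
  then obtain lam where "poly (char_poly B) lam = 0" using alg_closed_imp_poly_has_root[of "char_poly B"] e by auto
  then have "eigenvalue B lam" using eigenvalue_root_char_poly[OF B] by simp
  then obtain x where x: "x \<in> carrier_vec e" "x \<noteq> 0\<^sub>v e" "B *\<^sub>v x = lam \<cdot>\<^sub>v x"
    unfolding eigenvalue_def eigenvector_def using B by auto
  moreover have "x \<in> {c \<cdot>\<^sub>v x | c. True}" using x by (intro CollectI exI[of _ 1]) auto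
  ultimately have "{c \<cdot>\<^sub>v x | c. True} = carrier_vec e"
    using irr eigenvector_line_submodule[OF B x(1,3)] by blast
  then show "e = 1" using line_eq_carrier_vec_imp_le_1 x(1) e by fastforce
qed

theorem triangularizable:
  fixes A :: "'f::alg_closed_field mat"
  assumes A: "A \<in> carrier_mat n n"
  obtains T Ti where "T \<in> carrier_mat n n" "Ti \<in> carrier_mat n n" "T * Ti = 1\<^sub>m n" "Ti * T = 1\<^sub>m n"
    "upper_triangular (Ti * A * T)"
proof -
  let ?r = "\<lambda>_::unit. A"
  have r: "mat_valued unit_monoid n ?r" using A by (simp add: mat_valued_def)
  obtain k Ws where s: "comp_series_between unit_monoid n ?r {0\<^sub>v n} (carrier_vec n) k Ws"
    using comp_series_exists[OF zero_submodule[OF r] carrier_submodule[OF r]] by force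
  obtain T Ti a where Ta: "adapted_basis n T Ti" "a 0 = 0" "\<forall>t<k. a t \<le> a (Suc t)" "a k = n"
    "\<forall>t<k. factor_iso unit_monoid n ?r (Ws t) (Ws (Suc t)) (a (Suc t) - a t) (\<lambda>h. diag_block (Ti * ?r h * T) (a t) (a (Suc t)))"
    "\<forall>h\<in>carrier unit_monoid. \<forall>t\<le>k. \<forall>i j. a t \<le> i \<longrightarrow> i < n \<longrightarrow> j < a t \<longrightarrow> (Ti * ?r h * T) $$ (i,j) = 0"
    by (rule comp_series_block_triangular[OF r s])
  have zero: "(Ti * A * T) $$ (i,j) = 0" if "t \<le> k" "a t \<le> i" "i < n" "j < a t" for t i j
    using Ta(6) that unfolding unit_monoid_def by simp
  have step: "a (Suc t) = Suc (a t)" if t: "t < k" for t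
  proof -
    have "Suc t \<le> k" using t by simp
    then have "is_submodule unit_monoid n ?r (Ws (Suc t))" "max_submodule unit_monoid n ?r (Ws t) (Ws (Suc t))"
      using s t unfolding comp_series_between_def by blast+
    note irr = factor_iso_irreducible[OF Ta(5)[rule_format, OF t] this]
    have "a (Suc t) - a t = 1" by (rule irreducible_operator_dim_1[OF diag_block_carrier irr])
    then show ?thesis by simp
  qed
  have at: "a t = t" if "t \<le> k" for t
    using that by (induction t) (auto simp: Ta(2) step)
  have "upper_triangular (Ti * A * T)"
  proof (rule upper_triangularI)
    fix i j assume "j < i" "i < dim_row (Ti * A * T)"
    moreover have "dim_row (Ti * A * T) = n" using Ta(1) by (auto simp: adapted_basis_def)
    moreover have "k = n" using at[of k] Ta(4) by simp
    ultimately show "(Ti * A * T) $$ (i, j) = 0" using zero[of i i j] at[of i] by simp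
  qed
  then show ?thesis using that Ta(1) unfolding adapted_basis_def by blast
qed

section \<open>Brauer characters\<close>

definition hat_root_sum :: "('f::field \<Rightarrow> complex) \<Rightarrow> 'f poly \<Rightarrow> complex" where
  "hat_root_sum hat p = (\<Sum>e\<in>{x. poly p x = 0}. of_nat (order e p) * hat e)"

lemma brauer_char_hat_root_sum: "brauer_char hat \<rho> g = hat_root_sum hat (char_poly (\<rho> g))"
  unfolding brauer_char_def hat_root_sum_def ..

lemma hat_root_sum_superset:
  assumes p: "p \<noteq> 0" and R: "finite R" "{x. poly p x = 0} \<subseteq> R"
  shows "hat_root_sum hat p = (\<Sum>x\<in>R. of_nat (order x p) * hat x)"
  unfolding hat_root_sum_def using p order_root by (intro sum.mono_neutral_left[OF R]) auto

lemma hat_root_sum_mult: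
  fixes p q :: "'f::field poly"
  assumes p: "p \<noteq> 0" and q: "q \<noteq> 0"
  shows "hat_root_sum hat (p * q) = hat_root_sum hat p + hat_root_sum hat q"
proof -
  let ?R = "{x. poly p x = 0} \<union> {x. poly q x = 0}"
  have fin: "finite ?R" using poly_roots_finite[OF p] poly_roots_finite[OF q] by simp
  have "hat_root_sum hat (p * q) = (\<Sum>x\<in>?R. of_nat (order x (p * q)) * hat x)"
    using p q by (intro hat_root_sum_superset[OF _ fin]) auto
  also have "\<dots> = (\<Sum>x\<in>?R. of_nat (order x p) * hat x) + (\<Sum>x\<in>?R. of_nat (order x q) * hat x)"
    using p q by (simp add: order_mult algebra_simps sum.distrib)
  also have "\<dots> = hat_root_sum hat p + hat_root_sum hat q"
    using p q by (simp add: hat_root_sum_superset[OF _ fin])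
  finally show ?thesis .
qed

lemma hat_root_sum_prod:
  fixes p :: "nat \<Rightarrow> 'f::field poly"
  assumes "\<forall>t<k. p t \<noteq> 0"
  shows "hat_root_sum hat (\<Prod>t<k. p t) = (\<Sum>t<k. hat_root_sum hat (p t))"
  using assms
proof (induction k)
  case 0
  then show ?case by (simp add: hat_root_sum_def)
next
  case (Suc k)
  then have "(\<Prod>t<k. p t) \<noteq> 0" "p k \<noteq> 0" by (auto simp: prod_zero_iff)
  then show ?case using Suc by (simp add: hat_root_sum_mult)
qed

lemma hat_root_sum_prod_linear:
  "hat_root_sum hat (\<Prod>i<n. [:- f i, 1:]) = (\<Sum>i<n. hat (f i))" for n :: nat
proof -
  have "hat_root_sum hat [:- c, 1:] = hat c" for c
  proof -
    have "{x. poly [:- c, 1:] x = 0} = {c}" by auto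
    then show ?thesis unfolding hat_root_sum_def by (simp add: order_linear)
  qed
  then show ?thesis by (simp add: hat_root_sum_prod)
qed

lemma char_poly_nonzero: "A \<in> carrier_mat n n \<Longrightarrow> char_poly (A :: 'a::field mat) \<noteq> 0"
  using degree_monic_char_poly[of A n] by (metis leading_coeff_0_iff one_neq_zero)

lemma char_poly_upper_triangular_prod:
  fixes U :: "'f::field mat"
  assumes U: "U \<in> carrier_mat n n" and "upper_triangular U"
  shows "char_poly U = (\<Prod>i<n. [:- (U $$ (i,i)), 1:])"
proof -
  have "char_poly U = (\<Prod>a\<leftarrow>diag_mat U. [:- a, 1:])"
    by (rule char_poly_upper_triangular[OF assms])
  also have "\<dots> = (\<Prod>i<n. [:- (U $$ (i,i)), 1:])"
    using U by (simp add: diag_mat_def o_def prod.distinct_set_conv_list[symmetric] atLeast0LessThan)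
  finally show ?thesis .
qed

lemma similar_upper_triangular:
  fixes A :: "'f::alg_closed_field mat"
  assumes A: "A \<in> carrier_mat n n"
  obtains T Ti U where "T \<in> carrier_mat n n" "Ti \<in> carrier_mat n n" "T * Ti = 1\<^sub>m n" "Ti * T = 1\<^sub>m n"
    "U \<in> carrier_mat n n" "upper_triangular U" "A = T * U * Ti"
    "char_poly A = (\<Prod>i<n. [:- (U $$ (i,i)), 1:])"
proof -
  obtain T Ti where T: "T \<in> carrier_mat n n" "Ti \<in> carrier_mat n n" "T * Ti = 1\<^sub>m n" "Ti * T = 1\<^sub>m n"
    "upper_triangular (Ti * A * T)"
    by (rule triangularizable[OF A])
  define U where "U = Ti * A * T"
  have TA: "Ti * A \<in> carrier_mat n n" by (rule mult_carrier_mat[OF T(2) A])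
  have U: "U \<in> carrier_mat n n" unfolding U_def by (rule mult_carrier_mat[OF TA T(1)])
  have "U * Ti = Ti * A * (T * Ti)" unfolding U_def by (rule assoc_mult_mat[OF TA T(1) T(2)])
  also have "\<dots> = Ti * A" using right_mult_one_mat[OF TA] T(3) by simp
  finally have "T * U * Ti = T * (Ti * A)" using assoc_mult_mat[OF T(1) U T(2)] by simp
  also have "\<dots> = A" using assoc_mult_mat[OF T(1) T(2) A] left_mult_one_mat[OF A] T(3) by simp
  finally have AU: "A = T * U * Ti" ..
  have "similar_mat A U"
    unfolding similar_mat_def similar_mat_wit_def Let_def using A U T AU
    by (intro exI[of _ T] exI[of _ Ti]) auto
  then have "char_poly A = char_poly U" by (rule char_poly_similar)
  also have "\<dots> = (\<Prod>i<n. [:- (U $$ (i,i)), 1:])"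
    by (rule char_poly_upper_triangular_prod[OF U]) (use T(5) in \<open>simp only: U_def\<close>)
  finally show ?thesis using that T(1-4) U AU T(5) unfolding U_def by blast
qed

lemma sum_div_mod:
  "(\<Sum>t<b * e. f (t div e) (t mod e)) = (\<Sum>s<b. \<Sum>u<e. f s u)" for b e :: nat
proof (cases "e = 0")
  case True then show ?thesis by simp
next
  case False
  show ?thesis
  proof (induction b)
    case 0 then show ?case by simp
  next
    case (Suc b)
    have "(\<Sum>t<Suc b * e. f (t div e) (t mod e)) = (\<Sum>t<b * e + e. f (t div e) (t mod e))"
      by (simp add: add.commute)
    also have "\<dots> = (\<Sum>t<b * e. f (t div e) (t mod e)) + (\<Sum>u<e. f ((b * e + u) div e) ((b * e + u) mod e))"
      by (rule sum_lessThan_add_split)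
    also have "(\<Sum>u<e. f ((b * e + u) div e) ((b * e + u) mod e)) = (\<Sum>u<e. f b u)"
      using False by (intro sum.cong) auto
    finally show ?case using Suc by simp
  qed
qed

lemma kron_carrier: "A \<in> carrier_mat a b \<Longrightarrow> B \<in> carrier_mat c e \<Longrightarrow> kron A B \<in> carrier_mat (a * c) (b * e)"
  unfolding kron_def by auto

lemma kron_index:
  assumes "A \<in> carrier_mat a b" "B \<in> carrier_mat c e" "i < a * c" "j < b * e"
  shows "kron A B $$ (i,j) = A $$ (i div c, j div e) * B $$ (i mod c, j mod e)"
  using assms unfolding kron_def by auto

lemma mult_mat_index_sum:
  "i < dim_row A \<Longrightarrow> j < dim_col B \<Longrightarrow> dim_col A = dim_row B \<Longrightarrow> (A * B) $$ (i,j) = (\<Sum>k<dim_col A. A $$ (i,k) * B $$ (k,j))"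
  by (simp add: index_mult_mat scalar_prod_def lessThan_atLeast0)

lemma kron_mult:
  fixes A :: "'f::field mat"
  assumes A: "A \<in> carrier_mat a b" and B: "B \<in> carrier_mat c e" and C: "C \<in> carrier_mat b f" and D: "D \<in> carrier_mat e h"
  shows "kron A B * kron C D = kron (A * C) (B * D)"
proof (rule eq_matI)
  fix i j assume i: "i < dim_row (kron (A * C) (B * D))" and j: "j < dim_col (kron (A * C) (B * D))"
  then have i': "i < a * c" and j': "j < f * h" using A B C D by (auto simp: kron_def)
  have c0: "c > 0" using i' by (cases c) auto
  have h0: "h > 0" using j' by (cases h) auto
  have idc: "i div c < a" using i' c0 by (simp add: less_mult_imp_div_less)
  have jdh: "j div h < f" using j' h0 by (simp add: less_mult_imp_div_less)
  have imc: "i mod c < c" and jmh: "j mod h < h" using c0 h0 by auto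
  have "(kron A B * kron C D) $$ (i,j) = (\<Sum>t<b * e. kron A B $$ (i,t) * kron C D $$ (t,j))"
    using kron_carrier[OF A B] kron_carrier[OF C D] i' j' by (subst mult_mat_index_sum) auto
  also have "\<dots> = (\<Sum>t<b * e. (A $$ (i div c, t div e) * C $$ (t div e, j div h)) * (B $$ (i mod c, t mod e) * D $$ (t mod e, j mod h)))"
  proof (rule sum.cong)
    fix t assume "t \<in> {..<b * e}" then have t: "t < b * e" by simp
    show "kron A B $$ (i,t) * kron C D $$ (t,j) = (A $$ (i div c, t div e) * C $$ (t div e, j div h)) * (B $$ (i mod c, t mod e) * D $$ (t mod e, j mod h))"
      using kron_index[OF A B i' t] kron_index[OF C D t j'] by (simp add: algebra_simps)
  qed simp
  also have "\<dots> = (\<Sum>s<b. \<Sum>u<e. (A $$ (i div c, s) * C $$ (s, j div h)) * (B $$ (i mod c, u) * D $$ (u, j mod h)))"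
    by (rule sum_div_mod[where f = "\<lambda>s u. (A $$ (i div c, s) * C $$ (s, j div h)) * (B $$ (i mod c, u) * D $$ (u, j mod h))"])
  also have "\<dots> = (\<Sum>s<b. A $$ (i div c, s) * C $$ (s, j div h)) * (\<Sum>u<e. B $$ (i mod c, u) * D $$ (u, j mod h))"
    by (simp add: sum_product)
  also have "\<dots> = (A * C) $$ (i div c, j div h) * (B * D) $$ (i mod c, j mod h)"
  proof -
    have "(A * C) $$ (i div c, j div h) = (\<Sum>s<b. A $$ (i div c, s) * C $$ (s, j div h))"
      using A C idc jdh by (subst mult_mat_index_sum) auto
    moreover have "(B * D) $$ (i mod c, j mod h) = (\<Sum>u<e. B $$ (i mod c, u) * D $$ (u, j mod h))"
      using B D imc jmh by (subst mult_mat_index_sum) auto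
    ultimately show ?thesis by simp
  qed
  also have "\<dots> = kron (A * C) (B * D) $$ (i,j)"
    using A B C D i' j' by (simp add: kron_index[of "A * C" a f "B * D" c h])
  finally show "(kron A B * kron C D) $$ (i,j) = kron (A * C) (B * D) $$ (i,j)" .
qed (use A B C D in \<open>auto simp: kron_def\<close>)

lemma kron_one: "kron (1\<^sub>m a) (1\<^sub>m c) = (1\<^sub>m (a * c) :: 'f::field mat)"
proof (rule eq_matI)
  fix i j assume "i < dim_row (1\<^sub>m (a * c) :: 'f mat)" "j < dim_col (1\<^sub>m (a * c) :: 'f mat)"
  then have i: "i < a * c" and j: "j < a * c" by auto
  then have c0: "c > 0" by (cases c) auto
  have "i div c < a" "j div c < a" using i j c0 by (auto simp: less_mult_imp_div_less)
  moreover have "(i div c = j div c \<and> i mod c = j mod c) \<longleftrightarrow> i = j" by (metis div_mult_mod_eq)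
  ultimately show "kron (1\<^sub>m a) (1\<^sub>m c) $$ (i,j) = (1\<^sub>m (a * c) :: 'f mat) $$ (i,j)"
    using i j c0 by (auto simp: kron_index[of _ a a _ c c])
qed (auto simp: kron_def)

lemma kron_upper_triangular:
  fixes U1 U2 :: "'f::field mat"
  assumes U1: "U1 \<in> carrier_mat a a" and U2: "U2 \<in> carrier_mat c c" and t1: "upper_triangular U1" and t2: "upper_triangular U2"
  shows "upper_triangular (kron U1 U2)"
proof (rule upper_triangularI)
  fix i j assume ji: "j < i" and i: "i < dim_row (kron U1 U2)"
  then have i': "i < a * c" using U1 U2 by (simp add: kron_def)
  have j': "j < a * c" using ji i' by simp
  have c0: "c > 0" using i' by (cases c) auto
  have le: "j div c \<le> i div c" using ji by (simp add: div_le_mono)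
  have ia: "i div c < a" using i' c0 by (simp add: less_mult_imp_div_less)
  show "kron U1 U2 $$ (i,j) = 0"
  proof (cases "j div c < i div c")
    case True
    then have "U1 $$ (i div c, j div c) = 0" using t1 U1 ia unfolding upper_triangular_def by auto
    then show ?thesis using kron_index[OF U1 U2 i' j'] by simp
  next
    case False
    then have eq: "j div c = i div c" using le by simp
    have "j mod c < i mod c"
    proof (rule ccontr)
      assume "\<not> j mod c < i mod c"
      then have "i mod c \<le> j mod c" by simp
      then have "i \<le> j" using eq by (metis add_le_cancel_left div_mult_mod_eq)
      then show False using ji by simp
    qed
    then have "U2 $$ (i mod c, j mod c) = 0" using t2 U2 c0 unfolding upper_triangular_def by auto
    then show ?thesis using kron_index[OF U1 U2 i' j'] by simp
  qed
qed

lemma similar_mat_conj: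
  fixes A B P Q :: "'f::field mat"
  assumes "A \<in> carrier_mat n n" "B \<in> carrier_mat n n" "P \<in> carrier_mat n n" "Q \<in> carrier_mat n n"
    "P * Q = 1\<^sub>m n" "Q * P = 1\<^sub>m n" "A = P * B * Q"
  shows "similar_mat A B"
  unfolding similar_mat_def similar_mat_wit_def using assms by (intro exI[of _ P] exI[of _ Q]) (auto simp: Let_def)

lemma poly_prod_linear_root:
  fixes m :: nat
  assumes "s < m"
  shows "poly (\<Prod>i<m. [:- f i, 1:]) (f s) = (0 :: 'a::field)"
proof -
  have "poly (\<Prod>i<m. [:- f i, 1:]) (f s) = (\<Prod>i<m. poly [:- f i, 1:] (f s))" by (rule poly_prod)
  also have "\<dots> = 0" using assms by (intro prod_zero) auto
  finally show ?thesis .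
qed

text \<open>After triangularizing both factors, the eigenvalues of a Kronecker product are seen to be the
  products of the eigenvalues of the factors.\<close>
lemma hat_root_sum_kron:
  fixes A B :: "'f::alg_closed_field mat"
  assumes A: "A \<in> carrier_mat e e" and B: "B \<in> carrier_mat n n"
    and hm: "\<forall>x\<in>R. \<forall>y\<in>R. hat (x * y) = hat x * hat y"
    and rA: "\<forall>x. poly (char_poly A) x = 0 \<longrightarrow> x \<in> R"
    and rB: "\<forall>x. poly (char_poly B) x = 0 \<longrightarrow> x \<in> R"
  shows "hat_root_sum hat (char_poly (kron A B)) = hat_root_sum hat (char_poly A) * hat_root_sum hat (char_poly B)"
proof -
  obtain T1 Ti1 U1 where T1: "T1 \<in> carrier_mat e e" "Ti1 \<in> carrier_mat e e" "T1 * Ti1 = 1\<^sub>m e"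
    "Ti1 * T1 = 1\<^sub>m e" "U1 \<in> carrier_mat e e" "upper_triangular U1" "A = T1 * U1 * Ti1"
    "char_poly A = (\<Prod>i<e. [:- (U1 $$ (i,i)), 1:])"
    by (rule similar_upper_triangular[OF A])
  obtain T2 Ti2 U2 where T2: "T2 \<in> carrier_mat n n" "Ti2 \<in> carrier_mat n n" "T2 * Ti2 = 1\<^sub>m n"
    "Ti2 * T2 = 1\<^sub>m n" "U2 \<in> carrier_mat n n" "upper_triangular U2" "B = T2 * U2 * Ti2"
    "char_poly B = (\<Prod>i<n. [:- (U2 $$ (i,i)), 1:])"
    by (rule similar_upper_triangular[OF B])
  let ?P = "kron T1 T2" and ?Q = "kron Ti1 Ti2" and ?U = "kron U1 U2"
  have P: "?P \<in> carrier_mat (e * n) (e * n)" and Q: "?Q \<in> carrier_mat (e * n) (e * n)"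
    and U: "?U \<in> carrier_mat (e * n) (e * n)" and KAB: "kron A B \<in> carrier_mat (e * n) (e * n)"
    using T1 T2 A B kron_carrier by blast+
  have PQ: "?P * ?Q = 1\<^sub>m (e * n)" using kron_mult[OF T1(1) T2(1) T1(2) T2(2)] T1(3) T2(3) kron_one by simp
  have QP: "?Q * ?P = 1\<^sub>m (e * n)" using kron_mult[OF T1(2) T2(2) T1(1) T2(1)] T1(4) T2(4) kron_one by simp
  have "?P * ?U * ?Q = kron (T1 * U1 * Ti1) (T2 * U2 * Ti2)"
    using kron_mult[OF T1(1) T2(1) T1(5) T2(5)] T1 T2 by (simp add: kron_mult[of _ e e _ n n _ e _ n])
  then have "similar_mat (kron A B) ?U" using T1(7) T2(7) by (intro similar_mat_conj[OF KAB U P Q PQ QP]) simp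
  then have cK: "char_poly (kron A B) = (\<Prod>t<e * n. [:- (?U $$ (t,t)), 1:])"
    using char_poly_upper_triangular_prod[OF U kron_upper_triangular[OF T1(5) T2(5) T1(6) T2(6)]]
    by (simp add: char_poly_similar)
  have r1: "U1 $$ (s,s) \<in> R" if "s < e" for s
    using rA poly_prod_linear_root[OF that, of "\<lambda>i. U1 $$ (i,i)"] T1(8) by auto
  have r2: "U2 $$ (u,u) \<in> R" if "u < n" for u
    using rB poly_prod_linear_root[OF that, of "\<lambda>i. U2 $$ (i,i)"] T2(8) by auto
  have "hat_root_sum hat (char_poly (kron A B)) = (\<Sum>t<e * n. hat (?U $$ (t,t)))"
    unfolding cK by (rule hat_root_sum_prod_linear)
  also have "\<dots> = (\<Sum>t<e * n. hat (U1 $$ (t div n, t div n) * U2 $$ (t mod n, t mod n)))"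
    by (intro sum.cong refl) (use T1 T2 in \<open>simp add: kron_index[of _ e e _ n n]\<close>)
  also have "\<dots> = (\<Sum>s<e. \<Sum>u<n. hat (U1 $$ (s, s) * U2 $$ (u, u)))"
    by (rule sum_div_mod[where f = "\<lambda>s u. hat (U1 $$ (s, s) * U2 $$ (u, u))"])
  also have "\<dots> = (\<Sum>s<e. hat (U1 $$ (s, s))) * (\<Sum>u<n. hat (U2 $$ (u, u)))"
    using hm r1 r2 by (simp add: sum_product)
  also have "\<dots> = hat_root_sum hat (char_poly A) * hat_root_sum hat (char_poly B)"
    unfolding T1(8) T2(8) hat_root_sum_prod_linear ..
  finally show ?thesis .
qed

lemma rep_nat_pow:
  fixes \<rho> :: "'g \<Rightarrow> 'a::field mat"
  assumes G: "group G" and rep: "is_rep G d \<rho>" and g: "g \<in> carrier G"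
  shows "\<rho> (g [^]\<^bsub>G\<^esub> k) = \<rho> g ^\<^sub>m k"
proof (induction k)
  case 0
  have "\<rho> g \<in> carrier_mat d d" using rep g by (simp add: is_rep_def)
  then show ?case using rep by (simp add: is_rep_def)
next
  case (Suc k)
  have "g [^]\<^bsub>G\<^esub> k \<in> carrier G" using G g by (simp add: group.is_monoid monoid.nat_pow_closed)
  then show ?case using Suc G rep g by (simp add: group.is_monoid monoid.nat_pow_Suc is_rep_def)
qed

lemma eigenvalue_pow_eq_1:
  fixes A :: "'f::field mat"
  assumes A: "A \<in> carrier_mat n n" and pow: "A ^\<^sub>m m = 1\<^sub>m n" and root: "poly (char_poly A) lam = 0"
  shows "lam ^ m = 1"
proof -
  obtain v where v: "v \<in> carrier_vec n" "v \<noteq> 0\<^sub>v n" "A *\<^sub>v v = lam \<cdot>\<^sub>v v"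
    using eigenvalue_root_char_poly[OF A] root A unfolding eigenvalue_def eigenvector_def by auto
  have pw: "(A ^\<^sub>m k) *\<^sub>v v = lam ^ k \<cdot>\<^sub>v v" for k
  proof (induction k)
    case (Suc k)
    have Ak: "A ^\<^sub>m k \<in> carrier_mat n n" using A by simp
    have "(A ^\<^sub>m Suc k) *\<^sub>v v = (A ^\<^sub>m k) *\<^sub>v (A *\<^sub>v v)"
      by (simp only: pow_mat.simps) (rule assoc_mult_mat_vec[OF Ak A v(1)])
    also have "\<dots> = lam ^ Suc k \<cdot>\<^sub>v v" using Suc v Ak by (simp add: mult_mat_vec smult_smult_assoc mult.commute)
    finally show ?case .
  qed (use v A in simp)
  obtain i where i: "i < n" "v $ i \<noteq> 0" using v(1,2) by (metis carrier_vecD eq_vecI index_zero_vec(1,2))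
  have "v $ i = lam ^ m * v $ i" using pw[of m] pow v(1) i by (metis index_smult_vec(1) carrier_vecD one_mult_mat_vec)
  then show ?thesis using i(2) by (metis mult_cancel_right2)
qed

lemma ord_dvd_p'_part:
  fixes G :: "('g, 'm) monoid_scheme"
  assumes G: "group G" and fin: "finite (carrier G)" and reg: "p_regular G TYPE('f::field) g"
  shows "group.ord G g dvd p'_part CHAR('f) (card (carrier G))"
proof -
  have g: "g \<in> carrier G" and nz: "(of_nat (group.ord G g) :: 'f) \<noteq> 0" using reg by (auto simp: p_regular_def)
  have dN: "group.ord G g dvd card (carrier G)"
    using group.ord_dvd_group_order[OF G g] by (simp add: Coset.order_def)
  show ?thesis
  proof (cases "CHAR('f) = 0")
    case False
    then have p: "prime CHAR('f)" by (simp add: prime_CHAR_semidom)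
    let ?r = "multiplicity CHAR('f) (card (carrier G))"
    have "coprime (group.ord G g) (CHAR('f) ^ ?r)"
      using nz prime_imp_power_coprime[OF p] by (simp add: of_nat_eq_0_iff_char_dvd)
    then have "group.ord G g * CHAR('f) ^ ?r dvd card (carrier G)"
      using dN multiplicity_dvd divides_mult by blast
    then obtain c where c: "card (carrier G) = CHAR('f) ^ ?r * (group.ord G g * c)"
      by (auto elim: dvdE simp: ac_simps)
    have "card (carrier G) div CHAR('f) ^ ?r = group.ord G g * c"
      using p by (subst c) (simp add: prime_gt_0_nat)
    then show ?thesis using False by (simp add: p'_part_def)
  qed (use dN in \<open>simp add: p'_part_def\<close>)
qed

text \<open>This is what makes the multiplicativity of hat applicable to eigenvalues.\<close>
lemma char_root_pow_p'_part:
  fixes \<rho> :: "'g \<Rightarrow> 'f::field mat"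
  assumes G: "group G" and fin: "finite (carrier G)" and reg: "p_regular G TYPE('f) g"
    and rep: "is_rep G d \<rho>" and root: "poly (char_poly (\<rho> g)) lam = 0"
  shows "lam ^ p'_part CHAR('f) (card (carrier G)) = 1"
proof -
  have g: "g \<in> carrier G" using reg by (simp add: p_regular_def)
  have "\<rho> g ^\<^sub>m group.ord G g = \<rho> (g [^]\<^bsub>G\<^esub> group.ord G g)" using rep_nat_pow[OF G rep g] by simp
  also have "\<dots> = 1\<^sub>m d" using group.pow_ord_eq_1[OF G g] rep by (simp add: is_rep_def)
  finally have "\<rho> g ^\<^sub>m group.ord G g = 1\<^sub>m d" .
  then have "lam ^ group.ord G g = 1" using eigenvalue_pow_eq_1 rep g root by (metis is_rep_def)
  moreover obtain c where "p'_part CHAR('f) (card (carrier G)) = group.ord G g * c"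
    using ord_dvd_p'_part[OF G fin reg] by (auto elim: dvdE)
  ultimately show ?thesis by (simp add: power_mult)
qed

lemma tensor_rep_is_rep:
  fixes S V :: "'g \<Rightarrow> 'f::field mat"
  assumes S: "is_rep G e S" and V: "is_rep G n V"
  shows "is_rep G (e * n) (tensor_rep S V)"
  unfolding is_rep_def tensor_rep_def
proof (intro conjI ballI)
  fix g assume g: "g \<in> carrier G"
  then show "kron (S g) (V g) \<in> carrier_mat (e * n) (e * n)"
    using S V by (intro kron_carrier) (auto simp: is_rep_def)
  fix h assume h: "h \<in> carrier G"
  have c: "S g \<in> carrier_mat e e" "S h \<in> carrier_mat e e" "V g \<in> carrier_mat n n" "V h \<in> carrier_mat n n"
    using S V g h by (auto simp: is_rep_def)
  show "kron (S (g \<otimes>\<^bsub>G\<^esub> h)) (V (g \<otimes>\<^bsub>G\<^esub> h)) = kron (S g) (V g) * kron (S h) (V h)"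
    using S V g h kron_mult[OF c(1) c(3) c(2) c(4)] by (simp add: is_rep_def)
qed (use S V kron_one in \<open>simp add: is_rep_def\<close>)

lemma brauer_char_tensor_rep:
  fixes S V :: "'g \<Rightarrow> 'f::alg_closed_field mat"
  assumes G: "group G" and fin: "finite (carrier G)" and reg: "p_regular G TYPE('f) g"
    and S: "is_rep G e S" and V: "is_rep G n V"
    and hat_mult: "\<forall>x\<in>{x::'f. x ^ p'_part CHAR('f) (card (carrier G)) = 1}.
      \<forall>y\<in>{x::'f. x ^ p'_part CHAR('f) (card (carrier G)) = 1}. hat (x * y) = hat x * hat y"
  shows "brauer_char hat (tensor_rep S V) g = brauer_char hat S g * brauer_char hat V g"
  unfolding brauer_char_hat_root_sum tensor_rep_def
  using reg S V char_root_pow_p'_part[OF G fin reg S] char_root_pow_p'_part[OF G fin reg V]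
  by (intro hat_root_sum_kron[OF _ _ hat_mult]) (auto simp: p_regular_def is_rep_def)

definition classifies_simples :: "('g, 'm) monoid_scheme \<Rightarrow> (nat \<times> ('g \<Rightarrow> 'f::field mat)) list \<Rightarrow> bool" where
  "classifies_simples G Ss \<longleftrightarrow> (\<forall>S\<in>set Ss. is_simple G (fst S) (snd S)) \<and>
     (\<forall>i<length Ss. \<forall>j<length Ss. i \<noteq> j \<longrightarrow> \<not> rep_iso G (fst (Ss ! i)) (snd (Ss ! i)) (fst (Ss ! j)) (snd (Ss ! j))) \<and>
     (\<forall>d (\<rho> :: 'g \<Rightarrow> 'f mat). is_simple G d \<rho> \<longrightarrow> (\<exists>i<length Ss. rep_iso G d \<rho> (fst (Ss ! i)) (snd (Ss ! i))))"

lemma classifies_simples_mat_valued: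
  "classifies_simples G Ss \<Longrightarrow> i < length Ss \<Longrightarrow> mat_valued G (fst (Ss ! i)) (snd (Ss ! i))"
  unfolding classifies_simples_def is_simple_def by (auto intro: is_rep_mat_valued)

lemma comp_factor_unique_simple:
  fixes Tr :: "'g \<Rightarrow> 'f::field mat"
  assumes G: "monoid G" and rep: "is_rep G D Tr" and Ss: "classifies_simples G Ss"
    and s: "comp_series_between G D Tr X Y k Ws" and t: "t < k"
  shows "\<exists>!i. i < length Ss \<and> factor_iso G D Tr (Ws t) (Ws (Suc t)) (fst (Ss ! i)) (snd (Ss ! i))"
proof -
  have r: "mat_valued G D Tr" using rep by (rule is_rep_mat_valued)
  have step: "is_submodule G D Tr (Ws t)" "is_submodule G D Tr (Ws (Suc t))"
    "max_submodule G D Tr (Ws t) (Ws (Suc t))"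
    using s t unfolding comp_series_between_def by auto
  obtain e \<sigma> where fi: "factor_iso G D Tr (Ws t) (Ws (Suc t)) e \<sigma>" "mat_valued G e \<sigma>"
    using factor_iso_exists[OF r step(1,2)] step(3) by (auto simp: max_submodule_def)
  then have "is_simple G e \<sigma>" using factor_iso_simple[OF G fi(1,2) rep step(2,3)] by blast
  then obtain i where i: "i < length Ss" "rep_iso G e \<sigma> (fst (Ss ! i)) (snd (Ss ! i))"
    using Ss unfolding classifies_simples_def by blast
  have "factor_iso G D Tr (Ws t) (Ws (Suc t)) (fst (Ss ! i)) (snd (Ss ! i))"
    using factor_iso_rep_iso_trans[OF fi(1) i(2) fi(2) classifies_simples_mat_valued[OF Ss i(1)] r
        submodule_carrier[OF step(2)]] .
  moreover have "j = i"
    if "j < length Ss" "factor_iso G D Tr (Ws t) (Ws (Suc t)) (fst (Ss ! j)) (snd (Ss ! j))" for j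
    using factor_iso_unique[OF that(2) calculation classifies_simples_mat_valued[OF Ss that(1)]
        classifies_simples_mat_valued[OF Ss i(1)] step(2)] Ss that(1) i(1)
    unfolding classifies_simples_def by blast
  ultimately show ?thesis using i(1) by blast
qed

lemma comp_factor_index:
  fixes Tr :: "'g \<Rightarrow> 'f::field mat"
  assumes G: "monoid G" and rep: "is_rep G D Tr" and Ss: "classifies_simples G Ss"
    and s: "comp_series_between G D Tr X Y k Ws"
  obtains idx where "\<forall>t<k. idx t < length Ss"
    "\<forall>t<k. \<forall>i<length Ss. factor_iso G D Tr (Ws t) (Ws (Suc t)) (fst (Ss ! i)) (snd (Ss ! i)) \<longleftrightarrow> i = idx t"
proof -
  define idx where
    "idx t = (THE i. i < length Ss \<and> factor_iso G D Tr (Ws t) (Ws (Suc t)) (fst (Ss ! i)) (snd (Ss ! i)))" for t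
  have "idx t < length Ss \<and> factor_iso G D Tr (Ws t) (Ws (Suc t)) (fst (Ss ! idx t)) (snd (Ss ! idx t))"
    if "t < k" for t
    unfolding idx_def by (rule theI'[OF comp_factor_unique_simple[OF G rep Ss s that]])
  then show ?thesis using that comp_factor_unique_simple[OF G rep Ss s] by blast
qed

lemma comp_mult_eq_card_index:
  fixes Tr :: "'g \<Rightarrow> 'f::field mat"
  assumes r: "mat_valued G D Tr" and s: "comp_series_between G D Tr {0\<^sub>v D} (carrier_vec D) k Ws"
    and Ss: "classifies_simples G Ss" and i: "i < length Ss"
    and idx: "\<forall>t<k. \<forall>i<length Ss. factor_iso G D Tr (Ws t) (Ws (Suc t)) (fst (Ss ! i)) (snd (Ss ! i)) \<longleftrightarrow> i = idx t"
  shows "comp_mult G D Tr (fst (Ss ! i)) (snd (Ss ! i)) = card {t. t < k \<and> idx t = i}"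
proof -
  have "is_comp_series G D Tr k Ws" using s by (simp add: is_comp_series_between)
  moreover have "{t. t < k \<and> factor_iso G D Tr (Ws t) (Ws (Suc t)) (fst (Ss ! i)) (snd (Ss ! i))}
      = {t. t < k \<and> idx t = i}" using idx i by auto
  ultimately show ?thesis
    using comp_mult_eq_factor_count[OF r _ classifies_simples_mat_valued[OF Ss i]] unfolding factor_count_def by simp
qed

lemma sum_regroup_by_index:
  fixes f :: "nat \<Rightarrow> 'a::comm_semiring_1" and k :: nat
  assumes "\<forall>t<k. idx t < l"
  shows "(\<Sum>t<k. f (idx t)) = (\<Sum>i<l. of_nat (card {t. t < k \<and> idx t = i}) * f i)"
proof -
  have "(\<Sum>t<k. f (idx t)) = (\<Sum>t<k. \<Sum>i<l. if i = idx t then f i else 0)"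
    using assms by (intro sum.cong) (auto simp: sum.delta')
  also have "\<dots> = (\<Sum>i<l. \<Sum>t<k. if i = idx t then f i else 0)" by (rule sum.swap)
  also have "\<dots> = (\<Sum>i<l. of_nat (card {t. t < k \<and> idx t = i}) * f i)"
  proof (rule sum.cong[OF refl])
    fix i
    have "(\<Sum>t<k. if i = idx t then f i else 0) = (\<Sum>t\<in>{t. t < k \<and> idx t = i}. f i)"
      by (rule sum.mono_neutral_cong_right) auto
    then show "(\<Sum>t<k. if i = idx t then f i else 0) = of_nat (card {t. t < k \<and> idx t = i}) * f i"
      by simp
  qed
  finally show ?thesis .
qed

text \<open>A composition series brings the matrices into block triangular form whose diagonal blocks are
  the composition factors; each factor is isomorphic to exactly one module of the list.\<close>
theorem brauer_char_comp_mult: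
  fixes G :: "('g, 'm) monoid_scheme" and Tr :: "'g \<Rightarrow> 'f::field mat"
  assumes G: "group G" and rep: "is_rep G D Tr" and g: "g \<in> carrier G" and Ss: "classifies_simples G Ss"
  shows "brauer_char hat Tr g =
    (\<Sum>i<length Ss. of_nat (comp_mult G D Tr (fst (Ss ! i)) (snd (Ss ! i))) * brauer_char hat (snd (Ss ! i)) g)"
proof -
  let ?l = "length Ss" and ?S = "\<lambda>i. snd (Ss ! i)" and ?e = "\<lambda>i. fst (Ss ! i)"
  have r: "mat_valued G D Tr" using rep by (rule is_rep_mat_valued)
  have mon: "monoid G" using G by (simp add: group.is_monoid)
  obtain k Ws where s: "comp_series_between G D Tr {0\<^sub>v D} (carrier_vec D) k Ws"
    using comp_series_exists[OF zero_submodule[OF r] carrier_submodule[OF r]] by force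
  obtain T Ti a where Ta: "adapted_basis D T Ti" "a 0 = 0" "\<forall>t<k. a t \<le> a (Suc t)" "a k = D"
    "\<forall>t<k. factor_iso G D Tr (Ws t) (Ws (Suc t)) (a (Suc t) - a t) (\<lambda>h. diag_block (Ti * Tr h * T) (a t) (a (Suc t)))"
    "\<forall>h\<in>carrier G. \<forall>t\<le>k. \<forall>i j. a t \<le> i \<longrightarrow> i < D \<longrightarrow> j < a t \<longrightarrow> (Ti * Tr h * T) $$ (i,j) = 0"
    by (rule comp_series_block_triangular[OF r s])
  obtain idx where idx: "\<forall>t<k. idx t < ?l"
    "\<forall>t<k. \<forall>i<?l. factor_iso G D Tr (Ws t) (Ws (Suc t)) (?e i) (?S i) \<longleftrightarrow> i = idx t"
    by (rule comp_factor_index[OF mon rep Ss s])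
  define \<sigma> where "\<sigma> t = (\<lambda>h. diag_block (Ti * Tr h * T) (a t) (a (Suc t)))" for t
  have \<sigma>: "mat_valued G (a (Suc t) - a t) (\<sigma> t)" for t by (simp add: mat_valued_def \<sigma>_def)
  have cp: "char_poly (\<sigma> t g) = char_poly (?S (idx t) g)" if t: "t < k" for t
  proof -
    have S: "mat_valued G (?e (idx t)) (?S (idx t))" using classifies_simples_mat_valued Ss idx(1) t by blast
    have "is_submodule G D Tr (Ws (Suc t))" using s t by (auto simp: comp_series_between_def)
    then have "rep_iso G (a (Suc t) - a t) (\<sigma> t) (?e (idx t)) (?S (idx t))"
      using factor_iso_unique[OF _ _ \<sigma> S] Ta(5) idx t unfolding \<sigma>_def by blast
    then show ?thesis using rep_iso_char_poly[OF _ \<sigma> S g] by blast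
  qed
  have "char_poly (Tr g) = (\<Prod>t<k. char_poly (\<sigma> t g))"
    using char_poly_comp_series[OF r g Ta(1-4,6)] unfolding \<sigma>_def .
  then have "brauer_char hat Tr g = (\<Sum>t<k. hat_root_sum hat (char_poly (\<sigma> t g)))"
    unfolding brauer_char_hat_root_sum
    by (simp add: hat_root_sum_prod \<sigma>_def char_poly_nonzero[OF diag_block_carrier])
  also have "\<dots> = (\<Sum>t<k. brauer_char hat (?S (idx t)) g)" using cp by (simp add: brauer_char_hat_root_sum)
  also have "\<dots> = (\<Sum>i<?l. of_nat (card {t. t < k \<and> idx t = i}) * brauer_char hat (?S i) g)"
    using idx(1) by (rule sum_regroup_by_index)
  also have "\<dots> = (\<Sum>i<?l. of_nat (comp_mult G D Tr (?e i) (?S i)) * brauer_char hat (?S i) g)"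
    using comp_mult_eq_card_index[OF r s Ss _ idx(2)] by simp
  finally show ?thesis .
qed

lemma row_mult_mat_eq_smult:
  fixes s M :: "'a::comm_ring_1 mat"
  assumes s: "s \<in> carrier_mat 1 l" and M: "M \<in> carrier_mat l l"
    and col: "\<And>j. j < l \<Longrightarrow> (\<Sum>k<l. s $$ (0,k) * M $$ (k,j)) = c * s $$ (0,j)"
  shows "s * M = c \<cdot>\<^sub>m s"
proof (rule eq_matI)
  fix i j assume "i < dim_row (c \<cdot>\<^sub>m s)" "j < dim_col (c \<cdot>\<^sub>m s)"
  then have "i = 0" "j < l" using s by auto
  then show "(s * M) $$ (i,j) = (c \<cdot>\<^sub>m s) $$ (i,j)" using s M col[of j] by (subst mult_mat_index_sum) auto
qed (use s M in auto)

lemma brauer_char_M_mat_column: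
  fixes hat :: "'f::alg_closed_field \<Rightarrow> complex" and V :: "'g \<Rightarrow> 'f mat"
  assumes grp: "group G" and fin: "finite (carrier G)"
    and hat_mult: "\<forall>x\<in>{x::'f. x ^ p'_part CHAR('f) (card (carrier G)) = 1}.
                   \<forall>y\<in>{x::'f. x ^ p'_part CHAR('f) (card (carrier G)) = 1}. hat (x * y) = hat x * hat y"
    and Ss: "classifies_simples G Ss" and V: "is_rep G n V" and g_reg: "p_regular G TYPE('f) g"
    and j: "j < length Ss"
  shows "(\<Sum>k<length Ss. s_vec hat Ss g $$ (k,0) * of_nat (M_mat G Ss n V $$ (k,j)))
    = brauer_char hat V g * s_vec hat Ss g $$ (j,0)"
proof -
  have g: "g \<in> carrier G" using g_reg by (simp add: p_regular_def)
  have S: "is_rep G (fst (Ss ! j)) (snd (Ss ! j))"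
    using Ss j by (auto simp: classifies_simples_def is_simple_def)
  have "(\<Sum>k<length Ss. s_vec hat Ss g $$ (k,0) * of_nat (M_mat G Ss n V $$ (k,j)))
      = brauer_char hat (tensor_rep (snd (Ss ! j)) V) g"
    using brauer_char_comp_mult[OF grp tensor_rep_is_rep[OF S V] g Ss] j
    by (simp add: M_mat_def s_vec_def mult.commute)
  also have "\<dots> = brauer_char hat V g * s_vec hat Ss g $$ (j,0)"
    using brauer_char_tensor_rep[OF grp fin g_reg S V hat_mult] j by (simp add: s_vec_def)
  finally show ?thesis .
qed

lemma s_vec_left_eigenvector:
  assumes col: "\<And>j. j < length Ss \<Longrightarrow>
    (\<Sum>k<length Ss. s_vec hat Ss g $$ (k,0) * of_nat (M_mat G Ss n V $$ (k,j))) = c * s_vec hat Ss g $$ (j,0)"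
  shows "transpose_mat (s_vec hat Ss g) * map_mat of_nat (M_mat G Ss n V) = c \<cdot>\<^sub>m transpose_mat (s_vec hat Ss g)"
    and "transpose_mat (s_vec hat Ss g) * map_mat of_int (L_mat G Ss n V)
      = (of_nat n - c) \<cdot>\<^sub>m transpose_mat (s_vec hat Ss g)"
proof -
  let ?l = "length Ss" and ?s = "transpose_mat (s_vec hat Ss g)"
  have s: "?s \<in> carrier_mat 1 ?l" by (simp add: s_vec_def)
  show "?s * map_mat of_nat (M_mat G Ss n V) = c \<cdot>\<^sub>m ?s"
    by (rule row_mult_mat_eq_smult[OF s]) (use col in \<open>simp_all add: M_mat_def s_vec_def\<close>)
  show "?s * map_mat of_int (L_mat G Ss n V) = (of_nat n - c) \<cdot>\<^sub>m ?s"
  proof (rule row_mult_mat_eq_smult[OF s])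
    show "map_mat of_int (L_mat G Ss n V) \<in> carrier_mat ?l ?l"
      by (rule carrier_matI) (simp_all add: L_mat_def M_mat_def)
    fix j assume j: "j < ?l"
    have "(\<Sum>k<?l. ?s $$ (0,k) * map_mat of_int (L_mat G Ss n V) $$ (k,j))
        = (\<Sum>k<?l. (if k = j then of_nat n * ?s $$ (0,k) else 0)
            - s_vec hat Ss g $$ (k,0) * of_nat (M_mat G Ss n V $$ (k,j)))"
      using j by (intro sum.cong) (auto simp: L_mat_def M_mat_def s_vec_def algebra_simps)
    also have "\<dots> = (of_nat n - c) * ?s $$ (0,j)"
      using j col[OF j] by (simp add: sum_subtractf algebra_simps s_vec_def)
    finally show "(\<Sum>k<?l. ?s $$ (0,k) * map_mat of_int (L_mat G Ss n V) $$ (k,j)) = (of_nat n - c) * ?s $$ (0,j)" .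
  qed
qed

theorem proposition3p4:
  fixes G :: "('g, 'm) monoid_scheme"
    and hat :: "'f::alg_closed_field \<Rightarrow> complex"
    and Ss :: "(nat \<times> ('g \<Rightarrow> 'f mat)) list"
    and n :: nat and V :: "'g \<Rightarrow> 'f mat" and g :: 'g
  assumes grp: "group G" and fin: "finite (carrier G)"
    and hat_iso: "bij_betw hat {x::'f. x ^ p'_part CHAR('f) (card (carrier G)) = 1}
                               {z::complex. z ^ p'_part CHAR('f) (card (carrier G)) = 1}"
    and hat_mult: "\<forall>x\<in>{x::'f. x ^ p'_part CHAR('f) (card (carrier G)) = 1}.
                   \<forall>y\<in>{x::'f. x ^ p'_part CHAR('f) (card (carrier G)) = 1}. hat (x * y) = hat x * hat y"
    and Ss_simple: "\<forall>S\<in>set Ss. is_simple G (fst S) (snd S)"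
    and Ss_distinct: "\<forall>i<length Ss. \<forall>j<length Ss. i \<noteq> j \<longrightarrow>
                        \<not> rep_iso G (fst (Ss ! i)) (snd (Ss ! i)) (fst (Ss ! j)) (snd (Ss ! j))"
    and Ss_all: "\<forall>d (\<rho> :: 'g \<Rightarrow> 'f mat). is_simple G d \<rho> \<longrightarrow>
                   (\<exists>i<length Ss. rep_iso G d \<rho> (fst (Ss ! i)) (snd (Ss ! i)))"
    and V_rep: "is_rep G n V"
    and g_reg: "p_regular G TYPE('f) g"
  shows "transpose_mat (s_vec hat Ss g) * map_mat of_nat (M_mat G Ss n V)
           = brauer_char hat V g \<cdot>\<^sub>m transpose_mat (s_vec hat Ss g)
       \<and> transpose_mat (s_vec hat Ss g) * map_mat of_int (L_mat G Ss n V)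
           = (of_nat n - brauer_char hat V g) \<cdot>\<^sub>m transpose_mat (s_vec hat Ss g)"
proof -
  have "classifies_simples G Ss" using Ss_simple Ss_distinct Ss_all by (simp add: classifies_simples_def)
  then have "(\<Sum>k<length Ss. s_vec hat Ss g $$ (k,0) * of_nat (M_mat G Ss n V $$ (k,j)))
      = brauer_char hat V g * s_vec hat Ss g $$ (j,0)" if "j < length Ss" for j
    using brauer_char_M_mat_column[OF grp fin hat_mult _ V_rep g_reg that] by blast
  from s_vec_left_eigenvector[OF this] show ?thesis ..
qed

end
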